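(* For every $n\in\mathbb{N}$ and every integer $d$ with $1\le d\le \sqrt{n}/3$, there exist a connected planar graph $G_d$ on $n$ vertices, vertices $u,v$ of $G_d$ with $d(u,v)=d$, and a deterministic root-choice rule for Algorithm KPR, such that for every integer $R>2d$, Algorithm KPR run on $G_d$ with parameter $R$ and this root-choice rule never separates $u$ and $v$ (i.e. $u$ and $v$ lie in the same output cluster with probability $1$).
   Context: Let $G=(V,E)$ be a connected unweighted planar graph and $d(\cdot,\cdot)$ its shortest-path distance. Two vertices are separated by a (random) partition of $V$ if they lie in different parts. Algorithm KPR with integer parameter $R\ge 1$: set $F=\emptyset$. For each of three phases $i=1,2,3$: for each connected component $C$ of the graph $(V,E\setminus F)$ (the components being those present at the start of the phase), choose a root $r\in C$, define the level of $x\in C$ as its distance from $r$ within $C$, sample $k$ uniformly from $\{0,1,\dots,R-1\}$ (independently), and add to $F$ every edge of $C$ joining a vertex at level $\ell$ to a vertex at level $\ell+1$ with $\ell\equiv k \pmod R$. Output the connected components of $(V,E\setminus F)$ as the clusters. A root-choice rule specifies, for each component $C$ encountered, which vertex of $C$ is used as its root. *)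

theory Defs
  imports "HOL-Analysis.Analysis"
begin

definition simple_graph :: "'a set \<Rightarrow> 'a set set \<Rightarrow> bool" where
  "simple_graph V E \<longleftrightarrow> finite V \<and> (\<forall>e\<in>E. e \<subseteq> V \<and> card e = 2)"

fun is_walk :: "'a set \<Rightarrow> 'a set set \<Rightarrow> 'a list \<Rightarrow> bool" where
  "is_walk V E [] = False"
| "is_walk V E [x] = (x \<in> V)"
| "is_walk V E (x # y # xs) = ({x, y} \<in> E \<and> is_walk V E (y # xs))"

definition reach :: "'a set \<Rightarrow> 'a set set \<Rightarrow> 'a \<Rightarrow> 'a \<Rightarrow> bool" where
  "reach V E x y \<longleftrightarrow> (\<exists>p. is_walk V E p \<and> hd p = x \<and> last p = y)"

definition gdist :: "'a set \<Rightarrow> 'a set set \<Rightarrow> 'a \<Rightarrow> 'a \<Rightarrow> nat" where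
  "gdist V E x y = (LEAST k. \<exists>p. is_walk V E p \<and> hd p = x \<and> last p = y \<and> length p = Suc k)"

definition connected_graph :: "'a set \<Rightarrow> 'a set set \<Rightarrow> bool" where
  "connected_graph V E \<longleftrightarrow> (\<forall>x\<in>V. \<forall>y\<in>V. reach V E x y)"

definition component :: "'a set \<Rightarrow> 'a set set \<Rightarrow> 'a \<Rightarrow> 'a set" where
  "component V E x = {y. reach V E x y}"

definition components :: "'a set \<Rightarrow> 'a set set \<Rightarrow> 'a set set" where
  "components V E = component V E ` V"

text \<open>Planarity: an embedding in the plane (complex numbers) with vertices as distinct
  points and edges as arcs that meet only at common endpoints and pass through no other vertex.\<close>
definition planar_graph :: "'a set \<Rightarrow> 'a set set \<Rightarrow> bool" where
  "planar_graph V E \<longleftrightarrow>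
     (\<exists>(pos :: 'a \<Rightarrow> complex) (\<gamma> :: 'a set \<Rightarrow> real \<Rightarrow> complex).
        inj_on pos V \<and>
        (\<forall>e\<in>E. arc (\<gamma> e) \<and> {pathstart (\<gamma> e), pathfinish (\<gamma> e)} = pos ` e) \<and>
        (\<forall>e\<in>E. \<forall>x\<in>V. pos x \<in> path_image (\<gamma> e) \<longrightarrow> x \<in> e) \<and>
        (\<forall>e\<in>E. \<forall>e'\<in>E. e \<noteq> e' \<longrightarrow>
            path_image (\<gamma> e) \<inter> path_image (\<gamma> e') \<subseteq> pos ` (e \<inter> e')))"

text \<open>F = edges removed so far; rho = root-choice rule (component \<mapsto> root);
  K = sampled offset k for each component (value in {0..<R}).  For each component C of (V, E - F),
  the levels are distances from rho C within C (= distances in (V, E - F), as C is a component),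
  and every edge of C joining level l to level l+1 with l mod R = K C is added to F.\<close>
definition kpr_phase :: "'a set \<Rightarrow> 'a set set \<Rightarrow> nat \<Rightarrow> ('a set \<Rightarrow> 'a) \<Rightarrow> ('a set \<Rightarrow> nat)
                          \<Rightarrow> 'a set set \<Rightarrow> 'a set set" where
  "kpr_phase V E R rho K F = F \<union>
     {e \<in> E - F. \<exists>C\<in>components V (E - F). e \<subseteq> C \<and>
        (\<exists>a b l. e = {a, b} \<and> l mod R = K C \<and>
                 gdist V (E - F) (rho C) a = l \<and> gdist V (E - F) (rho C) b = Suc l)}"

definition kpr_removed :: "'a set \<Rightarrow> 'a set set \<Rightarrow> nat \<Rightarrow> ('a set \<Rightarrow> 'a)
     \<Rightarrow> ('a set \<Rightarrow> nat) \<Rightarrow> ('a set \<Rightarrow> nat) \<Rightarrow> ('a set \<Rightarrow> nat) \<Rightarrow> 'a set set" where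
  "kpr_removed V E R rho K1 K2 K3 =
     kpr_phase V E R rho K3 (kpr_phase V E R rho K2 (kpr_phase V E R rho K1 {}))"

end

theory Submission
  imports Defs
begin

text \<open>The graph \<open>G\<^sub>d\<close> is a cycle of length \<open>L \<approx> 2d\<close> through \<open>u = Cyc 0\<close> and \<open>v = Cyc d\<close>, together
  with two poles joined to every cycle vertex by spokes of length \<open>d\<close> (plus a tail padding the vertex
  count to \<open>n\<close>).  The root rule picks a pole whenever one lies in the component of \<open>u\<close>.  Seen from a
  pole, the whole cycle is at level \<open>d\<close> and the other pole at level \<open>2d < R\<close>: a cut below level \<open>d\<close>
  separates the root from \<open>u\<close> but spares the other fan, and a cut at or above \<open>d\<close> spares the root's fan,
  and the other fan too unless it separates the other pole from \<open>u\<close>.  So every pole-rooted phase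
  keeps the cycle, and after the first phase some pole is still attached to \<open>u\<close>.  If no pole is
  left for the third phase, the root is the cycle vertex \<open>w = Cyc (d + h)\<close>, \<open>h = \<lceil>d/2\<rceil>\<close>: the long arc
  from \<open>v\<close> back to \<open>u\<close> lies at levels \<open>\<le> h\<close> and the short arc at levels in \<open>[h, 2d]\<close>, so one of
  the two arcs always survives.\<close>

section \<open>Walks, reachability and distance\<close>

lemma is_walk_not_Nil: "is_walk V E p \<Longrightarrow> p \<noteq> []"
  by (cases p) auto

lemma is_walk_mono: "is_walk V E p \<Longrightarrow> E \<subseteq> E' \<Longrightarrow> is_walk V E' p"
  by (induction p rule: is_walk.induct) auto

lemma is_walk_append:
  "is_walk V E p \<Longrightarrow> is_walk V E q \<Longrightarrow> last p = hd q \<Longrightarrow> is_walk V E (p @ tl q)"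
proof (induction p rule: is_walk.induct)
  case (2 V E x)
  then show ?case by (cases q) auto
qed auto

lemma is_walk_snoc: "is_walk V E p \<Longrightarrow> {last p, y} \<in> E \<Longrightarrow> y \<in> V \<Longrightarrow> is_walk V E (p @ [y])"
  using is_walk_append[of V E p "[last p, y]"] by auto

lemma is_walk_rev: "is_walk V E p \<Longrightarrow> \<forall>e\<in>E. e \<subseteq> V \<Longrightarrow> hd p \<in> V \<Longrightarrow> is_walk V E (rev p)"
proof (induction p rule: is_walk.induct)
  case (3 V E x y xs)
  then have "is_walk V E (rev (y # xs))" by auto
  with 3 show ?case using is_walk_snoc[of V E "rev (y # xs)" x] by (auto simp: insert_commute)
qed auto

lemma is_walk_upt:
  assumes "\<And>k. k < N \<Longrightarrow> {f k, f (Suc k)} \<in> E" "\<And>k. k \<le> N \<Longrightarrow> f k \<in> V"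
  shows "is_walk V E (map f [0..<Suc N])"
  using assms
proof (induction N)
  case (Suc N)
  then have w: "is_walk V E (map f [0..<Suc N])" by auto
  have "is_walk V E (map f [0..<Suc N] @ [f (Suc N)])"
    by (rule is_walk_snoc[OF w]) (use Suc.prems in \<open>simp_all del: upt_Suc add: last_map\<close>)
  then show ?case by simp
qed simp

lemma reach_refl: "x \<in> V \<Longrightarrow> reach V E x x"
  unfolding reach_def by (rule exI[of _ "[x]"]) auto

lemma reach_edge: "{x, y} \<in> E \<Longrightarrow> y \<in> V \<Longrightarrow> reach V E x y"
  unfolding reach_def by (rule exI[of _ "[x, y]"]) auto

lemma reach_mono: "reach V E x y \<Longrightarrow> E \<subseteq> E' \<Longrightarrow> reach V E' x y"
  unfolding reach_def using is_walk_mono by blast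

lemma reach_trans: "reach V E x y \<Longrightarrow> reach V E y z \<Longrightarrow> reach V E x z"
  unfolding reach_def
proof (elim exE conjE)
  fix p q assume "is_walk V E p" "hd p = x" "last p = y" "is_walk V E q" "hd q = y" "last q = z"
  then show "\<exists>p. is_walk V E p \<and> hd p = x \<and> last p = z"
    using is_walk_append[of V E p q] is_walk_not_Nil[of V E p] is_walk_not_Nil[of V E q]
    by (intro exI[of _ "p @ tl q"]) (cases q; auto simp: last_append)
qed

lemma reach_sym: "reach V E x y \<Longrightarrow> \<forall>e\<in>E. e \<subseteq> V \<Longrightarrow> x \<in> V \<Longrightarrow> reach V E y x"
  unfolding reach_def
proof (elim exE conjE)
  fix p assume "is_walk V E p" "hd p = x" "last p = y" "\<forall>e\<in>E. e \<subseteq> V" "x \<in> V"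
  then show "\<exists>p. is_walk V E p \<and> hd p = y \<and> last p = x"
    using is_walk_rev[of V E p] is_walk_not_Nil[of V E p]
    by (intro exI[of _ "rev p"]) (auto simp: hd_rev last_rev)
qed

lemma gdist_le_length:
  assumes "is_walk V E p" "hd p = x" "last p = y"
  shows "gdist V E x y \<le> length p - 1"
  unfolding gdist_def
  by (rule Least_le) (use assms is_walk_not_Nil[OF assms(1)] in \<open>intro exI[of _ p]; auto\<close>)

lemma reach_shortest_walk:
  assumes "reach V E x y"
  obtains p where "is_walk V E p" "hd p = x" "last p = y" "length p = Suc (gdist V E x y)"
proof -
  obtain p where p: "is_walk V E p" "hd p = x" "last p = y"
    using assms unfolding reach_def by blast
  then have "\<exists>k q. is_walk V E q \<and> hd q = x \<and> last q = y \<and> length q = Suc k"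
    using is_walk_not_Nil[OF p(1)] by (intro exI[of _ "length p - 1"] exI[of _ p]) auto
  from LeastI_ex[OF this] obtain q where "is_walk V E q" "hd q = x" "last q = y"
    "length q = Suc (gdist V E x y)" unfolding gdist_def by blast
  then show ?thesis by (rule that)
qed

lemma gdist_refl: "x \<in> V \<Longrightarrow> gdist V E x x = 0"
  using gdist_le_length[of V E "[x]" x x] by simp

lemma gdist_triangle:
  assumes "reach V E x y" "reach V E y z"
  shows "gdist V E x z \<le> gdist V E x y + gdist V E y z"
proof -
  obtain p where p: "is_walk V E p" "hd p = x" "last p = y" "length p = Suc (gdist V E x y)"
    using assms(1) by (rule reach_shortest_walk)
  obtain q where q: "is_walk V E q" "hd q = y" "last q = z" "length q = Suc (gdist V E y z)"
    using assms(2) by (rule reach_shortest_walk)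
  have "is_walk V E (p @ tl q)" "hd (p @ tl q) = x"
    using is_walk_append[OF p(1) q(1)] p q is_walk_not_Nil[OF p(1)] by auto
  moreover have "last (p @ tl q) = z"
    using p q is_walk_not_Nil[OF q(1)] by (cases q) auto
  ultimately show ?thesis using gdist_le_length[of V E "p @ tl q"] p q by simp
qed

lemma gdist_edge_le:
  assumes "reach V E r a" "{a, b} \<in> E" "b \<in> V"
  shows "gdist V E r b \<le> gdist V E r a + 1"
proof -
  have "gdist V E a b \<le> 1"
    using gdist_le_length[of V E "[a, b]" a b] assms(2,3) by simp
  then show ?thesis using gdist_triangle[OF assms(1) reach_edge[OF assms(2,3)]] by simp
qed

lemma gdist_commute_le:
  assumes "reach V E x y" "\<forall>e\<in>E. e \<subseteq> V" "x \<in> V"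
  shows "gdist V E y x \<le> gdist V E x y"
proof -
  obtain p where p: "is_walk V E p" "hd p = x" "last p = y" "length p = Suc (gdist V E x y)"
    using assms(1) by (rule reach_shortest_walk)
  have "is_walk V E (rev p)" using is_walk_rev[OF p(1) assms(2)] p assms by simp
  from gdist_le_length[OF this] p is_walk_not_Nil[OF p(1)] show ?thesis
    by (simp add: hd_rev last_rev)
qed

lemma potential_le_gdist:
  assumes step: "\<And>a b. {a, b} \<in> E \<Longrightarrow> f b \<le> f a + (1::nat)"
    and "E' \<subseteq> E" "reach V E' x y"
  shows "f y \<le> f x + gdist V E' x y"
proof -
  have walk: "f (last p) \<le> f (hd p) + (length p - 1)" if "is_walk V E p" for p
    using that
  proof (induction p)
    case (Cons x xs)
    show ?case
    proof (cases xs)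
      case (Cons y ys)
      with Cons.prems have "f y \<le> f x + 1" "is_walk V E xs" using step[of x y] by auto
      with Cons.IH Cons show ?thesis by simp
    qed simp
  qed simp
  obtain p where "is_walk V E' p" "hd p = x" "last p = y" "length p = Suc (gdist V E' x y)"
    using assms(3) by (rule reach_shortest_walk)
  with walk[of p] is_walk_mono[of V E' p E] assms(2) show ?thesis by simp
qed

lemma reach_along:
  assumes "\<And>k. k < N \<Longrightarrow> {f k, f (Suc k)} \<in> E" "\<And>k. k \<le> N \<Longrightarrow> f k \<in> V"
  shows "reach V E (f 0) (f N)" "gdist V E (f 0) (f N) \<le> N"
proof -
  have w: "is_walk V E (map f [0..<Suc N])" using is_walk_upt assms by blast
  have h: "hd (map f [0..<Suc N]) = f 0" by (simp del: upt_Suc add: hd_map upt_conv_Cons)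
  have l: "last (map f [0..<Suc N]) = f N" by (simp del: upt_Suc add: last_map)
  show "reach V E (f 0) (f N)" unfolding reach_def using w h l by blast
  show "gdist V E (f 0) (f N) \<le> N" using gdist_le_length[OF w h l] by simp
qed

lemma component_in_components: "x \<in> V \<Longrightarrow> component V E x \<in> components V E"
  unfolding components_def by auto

lemma components_disjoint:
  assumes "\<forall>e\<in>E. e \<subseteq> V" "C \<in> components V E" "D \<in> components V E" "z \<in> C" "z \<in> D"
  shows "C = D"
proof -
  have "C = component V E z" if C: "C \<in> components V E" "z \<in> C" for C
  proof -
    obtain x where x: "x \<in> V" "C = component V E x"
      using C(1) unfolding components_def by auto
    then have xz: "reach V E x z" using C(2) unfolding component_def by simp
    have "reach V E x y \<longleftrightarrow> reach V E z y" for y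
      using reach_trans[OF xz] reach_trans[OF reach_sym[OF xz assms(1) x(1)]] by blast
    then show ?thesis unfolding x(2) component_def by blast
  qed
  then show ?thesis using assms by blast
qed

lemma components_closed:
  assumes "C \<in> components V E" "x \<in> C" "reach V E x y"
  shows "y \<in> C"
proof -
  obtain z where "C = component V E z" using assms(1) unfolding components_def by blast
  then show ?thesis using assms(2) reach_trans[OF _ assms(3)] unfolding component_def by simp
qed

lemma components_reach:
  assumes "\<forall>e\<in>E. e \<subseteq> V" "C \<in> components V E" "x \<in> C" "y \<in> C"
  shows "reach V E x y"
proof -
  obtain z where "z \<in> V" "C = component V E z" using assms(2) unfolding components_def by blast
  then have "reach V E z x" "reach V E z y" using assms(3,4) unfolding component_def by simp_all
  then show ?thesis using reach_trans[OF reach_sym[OF _ assms(1) \<open>z \<in> V\<close>]] by blast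
qed

section \<open>One phase of KPR\<close>

definition level_cut :: "nat \<Rightarrow> nat \<Rightarrow> ('a \<Rightarrow> nat) \<Rightarrow> 'a set \<Rightarrow> bool" where
  "level_cut R k lev e \<longleftrightarrow> (\<exists>a b l. e = {a, b} \<and> l mod R = k \<and> lev a = l \<and> lev b = Suc l)"

lemma kpr_phase_level_cut:
  "kpr_phase V E R rho K F = F \<union> {e \<in> E - F. \<exists>C\<in>components V (E - F). e \<subseteq> C \<and>
     level_cut R (K C) (gdist V (E - F) (rho C)) e}"
  unfolding kpr_phase_def level_cut_def ..

lemma not_level_cut_below: "\<forall>x\<in>e. lev x \<le> k \<Longrightarrow> \<not> level_cut R k lev e"
  unfolding level_cut_def using mod_less_eq_dividend by (metis insertCI not_less_eq_eq order_trans)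

lemma not_level_cut_above: "\<forall>x\<in>e. k < lev x \<and> lev x \<le> R \<Longrightarrow> \<not> level_cut R k lev e"
  unfolding level_cut_def by auto

lemma not_level_cut_flat: "\<forall>x\<in>e. lev x = c \<Longrightarrow> \<not> level_cut R k lev e"
  unfolding level_cut_def by auto

lemma kpr_phase_mono: "F \<subseteq> kpr_phase V E R rho K F"
  unfolding kpr_phase_def by auto

lemma kpr_phase_keeps_edge:
  assumes "\<forall>e\<in>E. e \<subseteq> V" "e \<in> E - F" "D \<in> components V (E - F)" "e \<subseteq> D"
    "\<not> level_cut R (K D) (gdist V (E - F) (rho D)) e"
  shows "e \<in> E - kpr_phase V E R rho K F"
proof (rule ccontr)
  assume "e \<notin> E - kpr_phase V E R rho K F"
  then obtain C where C: "C \<in> components V (E - F)" "e \<subseteq> C"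
    "level_cut R (K C) (gdist V (E - F) (rho C)) e"
    using assms(2) unfolding kpr_phase_level_cut by blast
  then obtain a where "a \<in> e" unfolding level_cut_def by blast
  then have "C = D" using components_disjoint[of "E - F" V C D a] C assms(1,3,4) by blast
  then show False using C(3) assms(5) by simp
qed

lemma kpr_phase_edge_same_side:
  assumes wf: "\<forall>e\<in>E. e \<subseteq> V" and D: "D \<in> components V (E - F)" "rho D \<in> D"
    and l: "l mod R = K D" and ab: "{a, b} \<in> E - kpr_phase V E R rho K F" "a \<in> D"
  shows "b \<in> D \<and> (l < gdist V (E - F) (rho D) a \<longleftrightarrow> l < gdist V (E - F) (rho D) b)"
proof
  let ?g = "gdist V (E - F) (rho D)"
  have abF: "{a, b} \<in> E - F" using ab kpr_phase_mono by blast
  have V: "a \<in> V" "b \<in> V" using abF wf by auto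
  show bD: "b \<in> D" using components_closed[OF D(1) ab(2) reach_edge[OF abF V(2)]] .
  have ba: "?g b \<le> ?g a + 1"
    using gdist_edge_le[OF components_reach[OF _ D(1,2) ab(2)] abF V(2)] wf by blast
  have ab': "?g a \<le> ?g b + 1"
    using gdist_edge_le[OF components_reach[OF _ D(1,2) bD], of a] abF V(1) wf
    by (auto simp: insert_commute)
  have not_cut: "\<not> level_cut R (K D) ?g {a, b}"
    using ab(1) abF D(1) ab(2) bD unfolding kpr_phase_level_cut by blast
  show "l < ?g a \<longleftrightarrow> l < ?g b"
  proof (rule ccontr)
    assume "\<not> (l < ?g a \<longleftrightarrow> l < ?g b)"
    then consider "?g a = Suc l" "?g b = l" | "?g a = l" "?g b = Suc l" using ba ab' by linarith
    then have "level_cut R (K D) ?g {a, b}"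
    proof cases
      case 1
      then show ?thesis unfolding level_cut_def using l
        by (intro exI[of _ b] exI[of _ a] exI[of _ l]) (simp add: insert_commute)
    next
      case 2
      then show ?thesis unfolding level_cut_def using l by blast
    qed
    with not_cut show False ..
  qed
qed

lemma kpr_phase_reach_same_side:
  assumes wf: "\<forall>e\<in>E. e \<subseteq> V" and D: "D \<in> components V (E - F)" "rho D \<in> D"
    and l: "l mod R = K D" and x: "x \<in> D"
    and reach: "reach V (E - kpr_phase V E R rho K F) x y"
  shows "l < gdist V (E - F) (rho D) x \<longleftrightarrow> l < gdist V (E - F) (rho D) y"
proof -
  have "last p \<in> D \<and> (l < gdist V (E - F) (rho D) (hd p) \<longleftrightarrow> l < gdist V (E - F) (rho D) (last p))"
    if "is_walk V (E - kpr_phase V E R rho K F) p" "hd p \<in> D" for p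
    using that
  proof (induction p)
    case (Cons a xs)
    show ?case
    proof (cases xs)
      case (Cons b ys)
      with Cons.prems have "{a, b} \<in> E - kpr_phase V E R rho K F"
        "is_walk V (E - kpr_phase V E R rho K F) xs" by auto
      with kpr_phase_edge_same_side[of E V D F rho l R K, OF wf D l] Cons.IH Cons.prems Cons
      show ?thesis by auto
    qed (use Cons.prems in simp)
  qed simp
  then show ?thesis using reach x unfolding reach_def by blast
qed

section \<open>The graph \<open>G\<^sub>d\<close>\<close>

datatype gvertex = Cyc nat | Spoke bool nat nat | Pole bool | Tail nat

locale double_wheel =
  fixes d n :: nat
  assumes d_pos: "1 \<le> d" and n_large: "9 * d\<^sup>2 \<le> n"
begin

definition h :: nat where "h = (d + 1) div 2"
definition L :: nat where "L = d + 2 * h"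
definition core_size :: nat where "core_size = L + 2 * (L * (d - 1)) + 2"
definition tail_len :: nat where "tail_len = n - core_size"

lemma h_bounds: "d \<le> 2 * h" "2 * h \<le> d + 1" "1 \<le> h" "h \<le> d"
  using d_pos unfolding h_def by presburger+

lemma L_bounds: "2 * d \<le> L" "L \<le> 2 * d + 1" "3 \<le> L" "d + h < L"
  using d_pos h_bounds unfolding L_def by auto

lemma core_size_le: "core_size \<le> n"
proof -
  have "core_size = L * (2 * d - 1) + 2"
    unfolding core_size_def using d_pos by (cases d) (auto simp: algebra_simps)
  also have "\<dots> \<le> (2 * d + 1) * (2 * d - 1) + 2"
    using L_bounds by (intro add_mono mult_right_mono) auto
  also have "\<dots> \<le> 9 * d\<^sup>2"
    using d_pos by (cases d) (auto simp: power2_eq_square algebra_simps)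
  finally show ?thesis using n_large by simp
qed

definition verts :: "gvertex set" where
  "verts = Cyc ` {..<L} \<union> (\<lambda>(b, i, j). Spoke b i j) ` (UNIV \<times> {..<L} \<times> {1..<d})
     \<union> range Pole \<union> Tail ` {..<tail_len}"

lemma mem_verts [simp]:
  "Cyc i \<in> verts \<longleftrightarrow> i < L"
  "Spoke b i j \<in> verts \<longleftrightarrow> i < L \<and> 0 < j \<and> j < d"
  "Pole b \<in> verts"
  "Tail j \<in> verts \<longleftrightarrow> j < tail_len"
  unfolding verts_def by (auto simp: image_iff Bex_def)

lemma card_verts: "card verts = n"
proof -
  have "card (Cyc ` {..<L}) = L" by (simp add: card_image inj_on_def)
  moreover have "card ((\<lambda>(b, i, j). Spoke b i j) ` (UNIV \<times> {..<L} \<times> {1..<d})) = 2 * (L * (d - 1))"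
    by (subst card_image) (auto simp: inj_on_def card_cartesian_product)
  moreover have "card (range Pole) = 2" by (simp add: UNIV_bool)
  moreover have "card (Tail ` {..<tail_len}) = tail_len" by (simp add: card_image inj_on_def)
  ultimately have "card verts = core_size + tail_len"
    unfolding verts_def core_size_def by (subst card_Un_disjoint; auto)+
  then show ?thesis using core_size_le unfolding tail_len_def by simp
qed

text \<open>The graph lives on \<open>{..<n}\<close>; any bijection with the abstract vertex set will do.\<close>

definition enc :: "gvertex \<Rightarrow> nat" where
  "enc = (SOME f. bij_betw f verts {..<n})"

lemma bij_enc: "bij_betw enc verts {..<n}"
proof -
  have "finite verts" unfolding verts_def by simp
  then have "\<exists>f. bij_betw f verts {..<n}"
    using ex_bij_betw_finite_nat[of verts] card_verts by (auto simp: atLeast0LessThan)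
  then show ?thesis unfolding enc_def by (rule someI_ex)
qed

lemma enc_in [simp]: "a \<in> verts \<Longrightarrow> enc a < n"
  using bij_enc by (auto dest: bij_betwE)

lemma enc_eq_iff: "a \<in> verts \<Longrightarrow> b \<in> verts \<Longrightarrow> enc a = enc b \<longleftrightarrow> a = b"
  using bij_enc by (auto simp: bij_betw_def inj_on_def)

lemma enc_surj: "x < n \<Longrightarrow> \<exists>a\<in>verts. x = enc a"
  using bij_enc by (auto simp: bij_betw_def)

abbreviation pole :: "bool \<Rightarrow> nat" where
  "pole b \<equiv> enc (Pole b)"

definition spoke :: "bool \<Rightarrow> nat \<Rightarrow> nat \<Rightarrow> gvertex" where
  "spoke b i j = (if j = 0 then Cyc i else if j = d then Pole b else Spoke b i j)"

lemma spoke_0 [simp]: "spoke b i 0 = Cyc i"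
  and spoke_d [simp]: "spoke b i d = Pole b"
  unfolding spoke_def using d_pos by auto

lemma spoke_in_verts: "i < L \<Longrightarrow> j \<le> d \<Longrightarrow> spoke b i j \<in> verts"
  unfolding spoke_def by auto

definition south :: "nat \<Rightarrow> gvertex" where
  "south k = (if k = 0 then Pole False else Tail (k - 1))"

lemma south_in_verts: "k \<le> tail_len \<Longrightarrow> south k \<in> verts"
  unfolding south_def by auto

definition arcs :: "(gvertex \<times> gvertex) set" where
  "arcs = {(Cyc i, Cyc (Suc i mod L)) | i. i < L}
     \<union> {(spoke b i j, spoke b i (Suc j)) | b i j. i < L \<and> j < d}
     \<union> {(south k, south (Suc k)) | k. k < tail_len}"

definition E :: "nat set set" where
  "E = (\<lambda>(a, c). {enc a, enc c}) ` arcs"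

lemma arcs_cases:
  assumes "(a, c) \<in> arcs"
  obtains (cycle) i where "i < L" "a = Cyc i" "c = Cyc (Suc i mod L)"
    | (spoke) b i j where "i < L" "j < d" "a = spoke b i j" "c = spoke b i (Suc j)"
    | (south) k where "k < tail_len" "a = south k" "c = south (Suc k)"
  using assms unfolding arcs_def by auto

lemma spoke_arc: "i < L \<Longrightarrow> j < d \<Longrightarrow> (spoke b i j, spoke b i (Suc j)) \<in> arcs"
  unfolding arcs_def by blast

lemma south_arc: "k < tail_len \<Longrightarrow> (south k, south (Suc k)) \<in> arcs"
  unfolding arcs_def by blast

lemma arcs_in_verts:
  assumes "(a, c) \<in> arcs"
  shows "a \<in> verts \<and> c \<in> verts \<and> a \<noteq> c"
  using assms
proof (cases rule: arcs_cases)
  case (cycle i)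
  have "Suc i mod L \<noteq> i"
  proof (cases "Suc i < L")
    case False
    then have "Suc i = L" using cycle(1) by simp
    then show ?thesis using L_bounds by auto
  qed simp
  then show ?thesis using cycle L_bounds by simp
next
  case (spoke b i j)
  then show ?thesis using spoke_in_verts[of i j b] spoke_in_verts[of i "Suc j" b]
    by (auto simp: spoke_def)
next
  case (south k)
  then show ?thesis using south_in_verts[of k] south_in_verts[of "Suc k"] by (auto simp: south_def)
qed

lemma E_edge: "(a, c) \<in> arcs \<Longrightarrow> {enc a, enc c} \<in> E"
  unfolding E_def by force

lemma E_wf: "\<forall>e\<in>E. e \<subseteq> {..<n}"
  unfolding E_def using arcs_in_verts by auto

lemma E_Diff_wf: "\<forall>e\<in>E - F. e \<subseteq> {..<n}"
  using E_wf by blast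

definition cycle_edges :: "nat set set" where
  "cycle_edges = {{enc (Cyc i), enc (Cyc (Suc i mod L))} | i. i < L}"

definition fan :: "bool \<Rightarrow> nat set set" where
  "fan b = {{enc (spoke b i j), enc (spoke b i (Suc j))} | i j. i < L \<and> j < d}"

lemma cycle_edges_subset_E: "cycle_edges \<subseteq> E"
  unfolding cycle_edges_def arcs_def using E_edge[unfolded arcs_def] by blast

lemma fan_subset_E: "fan b \<subseteq> E"
  unfolding fan_def using E_edge[unfolded arcs_def] by blast

lemma reach_around_cycle:
  assumes "\<And>k. k < N \<Longrightarrow> {enc (Cyc ((a + k) mod L)), enc (Cyc (Suc ((a + k) mod L) mod L))} \<in> E'"
    and "a < L"
  shows "reach {..<n} E' (enc (Cyc a)) (enc (Cyc ((a + N) mod L)))"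
    "gdist {..<n} E' (enc (Cyc a)) (enc (Cyc ((a + N) mod L))) \<le> N"
proof -
  define f where "f k = enc (Cyc ((a + k) mod L))" for k
  have "{f k, f (Suc k)} \<in> E'" if "k < N" for k
    using assms(1)[OF that] unfolding f_def by (simp add: mod_Suc_eq)
  moreover have "f k \<in> {..<n}" for k unfolding f_def using L_bounds by simp
  moreover have "f 0 = enc (Cyc a)" unfolding f_def using assms(2) by simp
  ultimately show "reach {..<n} E' (enc (Cyc a)) (enc (Cyc ((a + N) mod L)))"
    "gdist {..<n} E' (enc (Cyc a)) (enc (Cyc ((a + N) mod L))) \<le> N"
    using reach_along[of N f E' "{..<n}"] unfolding f_def by auto
qed

lemma reach_cycle:
  assumes "cycle_edges \<subseteq> E'" "a < L"
  shows "reach {..<n} E' (enc (Cyc a)) (enc (Cyc ((a + N) mod L)))"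
    "gdist {..<n} E' (enc (Cyc a)) (enc (Cyc ((a + N) mod L))) \<le> N"
proof -
  have "{enc (Cyc ((a + k) mod L)), enc (Cyc (Suc ((a + k) mod L) mod L))} \<in> E'" for k
  proof -
    have "(a + k) mod L < L" using L_bounds by simp
    then show ?thesis using assms(1) unfolding cycle_edges_def by blast
  qed
  then show "reach {..<n} E' (enc (Cyc a)) (enc (Cyc ((a + N) mod L)))"
    "gdist {..<n} E' (enc (Cyc a)) (enc (Cyc ((a + N) mod L))) \<le> N"
    using reach_around_cycle[OF _ assms(2)] by blast+
qed

lemma reach_spoke_from_pole:
  assumes "fan b \<subseteq> E'" "i < L" "j \<le> d"
  shows "reach {..<n} E' (pole b) (enc (spoke b i j))"
    "gdist {..<n} E' (pole b) (enc (spoke b i j)) \<le> d - j"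
proof -
  define f where "f k = enc (spoke b i (d - k))" for k
  have "{f k, f (Suc k)} \<in> E'" if "k < d - j" for k
  proof -
    have "d - k = Suc (d - Suc k)" using that by simp
    then have "{f k, f (Suc k)} = {enc (spoke b i (d - Suc k)), enc (spoke b i (Suc (d - Suc k)))}"
      unfolding f_def by (simp add: insert_commute)
    moreover have "d - Suc k < d" using that by simp
    ultimately have "{f k, f (Suc k)} \<in> fan b"
      unfolding fan_def using assms(2) by blast
    then show ?thesis using assms(1) by blast
  qed
  moreover have "f k \<in> {..<n}" for k unfolding f_def using spoke_in_verts[OF assms(2)] by simp
  moreover have "f 0 = pole b" "f (d - j) = enc (spoke b i j)"
    unfolding f_def using assms(3) by simp_all
  ultimately show "reach {..<n} E' (pole b) (enc (spoke b i j))"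
    "gdist {..<n} E' (pole b) (enc (spoke b i j)) \<le> d - j"
    using reach_along[of "d - j" f E' "{..<n}"] by auto
qed

lemma reach_spoke_from_cycle:
  assumes "fan b \<subseteq> E'" "i < L" "j \<le> d"
  shows "reach {..<n} E' (enc (Cyc i)) (enc (spoke b i j))"
    "gdist {..<n} E' (enc (Cyc i)) (enc (spoke b i j)) \<le> j"
proof -
  define f where "f k = enc (spoke b i k)" for k
  have "{f k, f (Suc k)} \<in> E'" if "k < j" for k
  proof -
    have "k < d" using that assms(3) by simp
    then show ?thesis using assms(1,2) unfolding f_def fan_def by blast
  qed
  moreover have "f k \<in> {..<n}" if "k \<le> j" for k
    unfolding f_def using spoke_in_verts[OF assms(2)] that assms(3) by simp
  ultimately show "reach {..<n} E' (enc (Cyc i)) (enc (spoke b i j))"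
    "gdist {..<n} E' (enc (Cyc i)) (enc (spoke b i j)) \<le> j"
    using reach_along[of j f E' "{..<n}"] unfolding f_def by auto
qed

definition cdist :: "nat \<Rightarrow> nat \<Rightarrow> nat" where
  "cdist a b = (let t = (if a \<le> b then b - a else a - b) in min t (L - t))"

lemma cdist_le: "cdist a b \<le> d"
proof -
  have "2 * cdist a b \<le> L" unfolding cdist_def Let_def by auto
  then show ?thesis using L_bounds by simp
qed

lemma cdist_step:
  assumes "a < L" "i < L"
  shows "cdist a (Suc i mod L) \<le> cdist a i + 1 \<and> cdist a i \<le> cdist a (Suc i mod L) + 1"
proof (cases "Suc i < L")
  case True
  then show ?thesis unfolding cdist_def Let_def by auto
next
  case False
  then have "Suc i = L" using assms by simp
  then have "i = L - 1" "Suc i mod L = 0" by auto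
  then show ?thesis using assms unfolding cdist_def Let_def by auto
qed

text \<open>\<open>pole_pot b\<close> is the distance from \<open>Pole b\<close> in \<open>G\<^sub>d\<close>, and \<open>cyc_pot a\<close> a lower bound for the
  distance from \<open>Cyc a\<close>; as they change by at most one along every arc, they bound distances from
  below in every subgraph.\<close>

definition pole_pot :: "bool \<Rightarrow> gvertex \<Rightarrow> nat" where
  "pole_pot b x = (case x of
       Cyc i \<Rightarrow> d
     | Spoke b' i j \<Rightarrow> if b' = b then d - j else d + j
     | Pole b' \<Rightarrow> if b' = b then 0 else 2 * d
     | Tail j \<Rightarrow> if b then 2 * d + j + 1 else j + 1)"

definition cyc_pot :: "nat \<Rightarrow> gvertex \<Rightarrow> nat" where
  "cyc_pot a x = (case x of
       Cyc i \<Rightarrow> cdist a i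
     | Spoke b i j \<Rightarrow> cdist a i - j
     | Pole b \<Rightarrow> 0
     | Tail j \<Rightarrow> 0)"

lemma pole_pot_spoke: "j \<le> d \<Longrightarrow> pole_pot b (spoke b' i j) = (if b' = b then d - j else d + j)"
  unfolding pole_pot_def spoke_def by auto

lemma cyc_pot_spoke: "j \<le> d \<Longrightarrow> cyc_pot a (spoke b i j) = cdist a i - j"
  unfolding cyc_pot_def spoke_def using cdist_le by auto

lemma pole_pot_arc:
  assumes "(x, y) \<in> arcs"
  shows "pole_pot b y \<le> pole_pot b x + 1 \<and> pole_pot b x \<le> pole_pot b y + 1"
  using assms
proof (cases rule: arcs_cases)
  case (spoke b' i j)
  then show ?thesis using pole_pot_spoke[of j b b' i] pole_pot_spoke[of "Suc j" b b' i] by auto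
qed (auto simp: pole_pot_def south_def)

lemma cyc_pot_arc:
  assumes "a < L" "(x, y) \<in> arcs"
  shows "cyc_pot a y \<le> cyc_pot a x + 1 \<and> cyc_pot a x \<le> cyc_pot a y + 1"
  using assms(2)
proof (cases rule: arcs_cases)
  case (cycle i)
  then show ?thesis using cdist_step[OF assms(1)] by (simp add: cyc_pot_def)
next
  case (spoke b i j)
  then show ?thesis using cyc_pot_spoke[of j a b i] cyc_pot_spoke[of "Suc j" a b i] by auto
qed (auto simp: cyc_pot_def south_def)

lemma potential_le_gdist_enc:
  assumes pot: "\<And>a c. (a, c) \<in> arcs \<Longrightarrow> f c \<le> f a + 1 \<and> f a \<le> f c + (1::nat)"
    and "reach {..<n} (E - F) (enc r) (enc x)" "r \<in> verts" "x \<in> verts"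
  shows "f x \<le> f r + gdist {..<n} (E - F) (enc r) (enc x)"
proof -
  let ?dec = "inv_into verts enc"
  have dec: "?dec (enc a) = a" if "a \<in> verts" for a
    using bij_enc that by (simp add: bij_betw_def inv_into_f_f)
  have "(f \<circ> ?dec) y \<le> (f \<circ> ?dec) x + 1" if xy: "{x, y} \<in> E" for x y
  proof -
    obtain a c where ac: "(a, c) \<in> arcs" "{x, y} = {enc a, enc c}"
      using xy unfolding E_def by force
    then show ?thesis using pot[OF ac(1)] arcs_in_verts[OF ac(1)] dec by (auto simp: doubleton_eq_iff)
  qed
  from potential_le_gdist[of E "f \<circ> ?dec", OF this _ assms(2)] show ?thesis
    using dec assms(3,4) by auto
qed

section \<open>Running KPR on \<open>G\<^sub>d\<close>\<close>

definition u0 :: nat where "u0 = enc (Cyc 0)"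
definition v0 :: nat where "v0 = enc (Cyc d)"
definition w0 :: nat where "w0 = enc (Cyc (d + h))"

text \<open>The root rule prefers the poles, and otherwise \<open>w\<^sub>0\<close>, the cycle vertex farthest from the middle of
  the short arc between \<open>u\<^sub>0\<close> and \<open>v\<^sub>0\<close>.\<close>

definition root :: "nat set \<Rightarrow> nat" where
  "root C = (if pole True \<in> C then pole True else if pole False \<in> C then pole False
     else if w0 \<in> C then w0 else (SOME x. x \<in> C))"

definition ucomp :: "nat set set \<Rightarrow> nat set" where
  "ucomp F = component {..<n} (E - F) u0"

definition intact :: "nat set set \<Rightarrow> bool" where
  "intact F \<longleftrightarrow> cycle_edges \<subseteq> E - F \<and> (\<forall>b. pole b \<in> ucomp F \<longrightarrow> fan b \<subseteq> E - F)"

abbreviation phase :: "nat \<Rightarrow> (nat set \<Rightarrow> nat) \<Rightarrow> nat set set \<Rightarrow> nat set set" where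
  "phase R K F \<equiv> kpr_phase {..<n} E R root K F"

abbreviation lev :: "nat set set \<Rightarrow> nat \<Rightarrow> nat \<Rightarrow> nat" where
  "lev F r \<equiv> gdist {..<n} (E - F) r"

lemma root_in: "C \<noteq> {} \<Longrightarrow> root C \<in> C"
  unfolding root_def by (simp add: some_in_eq)

lemma root_pole: "pole b \<in> C \<Longrightarrow> \<exists>b. pole b \<in> C \<and> root C = pole b"
  unfolding root_def by (cases b) auto

lemma u0_in: "u0 < n" and v0_in: "v0 < n"
  unfolding u0_def v0_def using L_bounds by simp_all

lemma ucomp_in_components: "ucomp F \<in> components {..<n} (E - F)"
  unfolding ucomp_def by (rule component_in_components) (simp add: u0_in)

lemma mem_ucomp: "x \<in> ucomp F \<longleftrightarrow> reach {..<n} (E - F) u0 x"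
  unfolding ucomp_def component_def by simp

lemma ucomp_closed: "r \<in> ucomp F \<Longrightarrow> reach {..<n} (E - F) r x \<Longrightarrow> x \<in> ucomp F"
  unfolding mem_ucomp by (rule reach_trans)

lemma ucomp_antimono:
  assumes "F \<subseteq> F'"
  shows "ucomp F' \<subseteq> ucomp F"
proof
  fix x assume "x \<in> ucomp F'"
  moreover have "E - F' \<subseteq> E - F" using assms by blast
  ultimately show "x \<in> ucomp F" unfolding mem_ucomp by (rule reach_mono)
qed

lemma pole_in_ucomp:
  assumes "fan b \<subseteq> E - F"
  shows "pole b \<in> ucomp F"
proof -
  have "0 < L" using L_bounds by simp
  from reach_spoke_from_pole(1)[OF assms this, of 0] have "reach {..<n} (E - F) (pole b) u0"
    unfolding u0_def by simp
  then show ?thesis unfolding mem_ucomp using reach_sym[OF _ E_Diff_wf] by simp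
qed

lemma w0_in_ucomp: "cycle_edges \<subseteq> E - F \<Longrightarrow> w0 \<in> ucomp F"
  using reach_cycle(1)[of "E - F" 0 "d + h"] L_bounds unfolding mem_ucomp u0_def w0_def by simp

lemma edge_survives_phase:
  assumes "e \<in> E - F" "r \<in> ucomp F" "root (ucomp F) = r" "\<forall>x\<in>e. reach {..<n} (E - F) r x"
    "\<not> level_cut R (K (ucomp F)) (lev F r) e"
  shows "e \<in> E - phase R K F"
proof -
  have "e \<subseteq> ucomp F" using assms(2,4) ucomp_closed by auto
  from kpr_phase_keeps_edge[OF E_wf assms(1) ucomp_in_components this] show ?thesis
    using assms(3,5) by simp
qed

lemma fan_survives_phase:
  assumes "fan b \<subseteq> E - F" "r \<in> ucomp F" "root (ucomp F) = r"
    and reach: "\<And>i j. i < L \<Longrightarrow> j \<le> d \<Longrightarrow> reach {..<n} (E - F) r (enc (spoke b i j))"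
    and uncut: "\<And>i j. i < L \<Longrightarrow> j < d \<Longrightarrow>
      \<not> level_cut R (K (ucomp F)) (lev F r) {enc (spoke b i j), enc (spoke b i (Suc j))}"
  shows "fan b \<subseteq> E - phase R K F"
proof
  fix e assume "e \<in> fan b"
  then obtain i j where ij: "i < L" "j < d" "e = {enc (spoke b i j), enc (spoke b i (Suc j))}"
    unfolding fan_def by blast
  have "\<forall>x\<in>e. reach {..<n} (E - F) r x" using ij reach[of i j] reach[of i "Suc j"] by auto
  then show "e \<in> E - phase R K F"
    using edge_survives_phase[OF _ assms(2,3)] assms(1) \<open>e \<in> fan b\<close> ij(3) uncut[OF ij(1,2)]
    by blast
qed

lemma phase_same_side:
  assumes "r \<in> ucomp F" "root (ucomp F) = r" "K (ucomp F) < R"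
    "reach {..<n} (E - phase R K F) u0 y"
  shows "K (ucomp F) < lev F r u0 \<longleftrightarrow> K (ucomp F) < lev F r y"
proof -
  have "u0 \<in> ucomp F" by (simp add: mem_ucomp reach_refl u0_in)
  with kpr_phase_reach_same_side[of E "{..<n}" "ucomp F" F root "K (ucomp F)" R K u0 y]
  show ?thesis using E_wf ucomp_in_components assms by simp
qed

context
  fixes F :: "nat set set" and b :: bool and R :: nat and K :: "nat set \<Rightarrow> nat"
  assumes intact: "intact F" and pole_b: "pole b \<in> ucomp F" and root_b: "root (ucomp F) = pole b"
    and R: "2 * d < R" and K: "K (ucomp F) < R"
begin

lemma root_fan_intact: "fan b \<subseteq> E - F"
  using intact pole_b unfolding intact_def by blast

lemma pole_lev_lower:
  assumes "reach {..<n} (E - F) (pole b) (enc x)" "x \<in> verts"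
  shows "pole_pot b x \<le> lev F (pole b) (enc x)"
  using potential_le_gdist_enc[of "pole_pot b", OF pole_pot_arc assms(1) _ assms(2)]
  by (simp add: pole_pot_def)

lemma pole_lev_spoke:
  assumes "i < L" "j \<le> d"
  shows "reach {..<n} (E - F) (pole b) (enc (spoke b i j))" "lev F (pole b) (enc (spoke b i j)) \<le> d - j"
  using reach_spoke_from_pole[OF root_fan_intact assms] by simp_all

lemma pole_lev_cycle:
  assumes "i < L"
  shows "reach {..<n} (E - F) (pole b) (enc (Cyc i))" "lev F (pole b) (enc (Cyc i)) = d"
proof -
  show reach: "reach {..<n} (E - F) (pole b) (enc (Cyc i))"
    using pole_lev_spoke(1)[OF assms, of 0] by simp
  show "lev F (pole b) (enc (Cyc i)) = d"
    using pole_lev_spoke(2)[OF assms, of 0] pole_lev_lower[OF reach] assms by (simp add: pole_pot_def)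
qed

lemma pole_lev_opposite:
  assumes "fan (\<not> b) \<subseteq> E - F" "i < L" "j \<le> d"
  shows "reach {..<n} (E - F) (pole b) (enc (spoke (\<not> b) i j))"
    "lev F (pole b) (enc (spoke (\<not> b) i j)) = d + j"
proof -
  note up = reach_spoke_from_cycle[OF assms]
  show reach: "reach {..<n} (E - F) (pole b) (enc (spoke (\<not> b) i j))"
    using reach_trans[OF pole_lev_cycle(1)[OF assms(2)] up(1)] .
  have "lev F (pole b) (enc (spoke (\<not> b) i j)) \<le> d + j"
    using gdist_triangle[OF pole_lev_cycle(1)[OF assms(2)] up(1)] up(2) pole_lev_cycle(2)[OF assms(2)]
    by simp
  moreover have "d + j \<le> lev F (pole b) (enc (spoke (\<not> b) i j))"
    using pole_lev_lower[OF reach spoke_in_verts[OF assms(2,3)]] pole_pot_spoke[OF assms(3)] by simp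
  ultimately show "lev F (pole b) (enc (spoke (\<not> b) i j)) = d + j" by simp
qed

lemma pole_lev_u0: "lev F (pole b) u0 = d"
  using pole_lev_cycle(2)[of 0] L_bounds unfolding u0_def by simp

lemma pole_phase_keeps_cycle: "cycle_edges \<subseteq> E - phase R K F"
proof
  fix e assume e: "e \<in> cycle_edges"
  then obtain i where i: "i < L" "e = {enc (Cyc i), enc (Cyc (Suc i mod L))}"
    unfolding cycle_edges_def by blast
  have "Suc i mod L < L" using L_bounds by simp
  then have lev: "\<forall>x\<in>e. reach {..<n} (E - F) (pole b) x \<and> lev F (pole b) x = d"
    using pole_lev_cycle i by auto
  have "e \<in> E - F" using e intact unfolding intact_def by blast
  then show "e \<in> E - phase R K F"
    by (rule edge_survives_phase[OF _ pole_b root_b])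
      (use lev not_level_cut_flat[of e "lev F (pole b)" d] in auto)
qed

lemma pole_phase_below:
  assumes low: "K (ucomp F) < d"
  shows "pole b \<notin> ucomp (phase R K F)"
    and "fan (\<not> b) \<subseteq> E - F \<Longrightarrow> fan (\<not> b) \<subseteq> E - phase R K F"
proof
  assume "pole b \<in> ucomp (phase R K F)"
  then have "K (ucomp F) < lev F (pole b) u0 \<longleftrightarrow> K (ucomp F) < lev F (pole b) (pole b)"
    using phase_same_side[where K = K, OF pole_b root_b K] unfolding mem_ucomp by blast
  then show False using pole_lev_u0 low gdist_refl[of "pole b"] by simp
next
  assume opp: "fan (\<not> b) \<subseteq> E - F"
  show "fan (\<not> b) \<subseteq> E - phase R K F"
  proof (rule fan_survives_phase[OF opp pole_b root_b])
    show "reach {..<n} (E - F) (pole b) (enc (spoke (\<not> b) i j))" if "i < L" "j \<le> d" for i j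
      using pole_lev_opposite(1)[OF opp that] .
    show "\<not> level_cut R (K (ucomp F)) (lev F (pole b))
        {enc (spoke (\<not> b) i j), enc (spoke (\<not> b) i (Suc j))}" if "i < L" "j < d" for i j
      using pole_lev_opposite(2)[OF opp that(1), of j] pole_lev_opposite(2)[OF opp that(1), of "Suc j"]
        that low R
      by (intro not_level_cut_above) auto
  qed
qed

lemma pole_phase_above:
  assumes high: "d \<le> K (ucomp F)"
  shows "fan b \<subseteq> E - phase R K F"
    and "pole (\<not> b) \<in> ucomp (phase R K F) \<Longrightarrow> fan (\<not> b) \<subseteq> E - phase R K F"
proof -
  show "fan b \<subseteq> E - phase R K F"
  proof (rule fan_survives_phase[OF root_fan_intact pole_b root_b])
    show "reach {..<n} (E - F) (pole b) (enc (spoke b i j))" if "i < L" "j \<le> d" for i j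
      using pole_lev_spoke(1)[OF that] .
    show "\<not> level_cut R (K (ucomp F)) (lev F (pole b)) {enc (spoke b i j), enc (spoke b i (Suc j))}"
      if "i < L" "j < d" for i j
      using pole_lev_spoke(2)[OF that(1), of j] pole_lev_spoke(2)[OF that(1), of "Suc j"] that high
      by (intro not_level_cut_below) auto
  qed
next
  assume opp_in: "pole (\<not> b) \<in> ucomp (phase R K F)"
  then have "pole (\<not> b) \<in> ucomp F" using ucomp_antimono[OF kpr_phase_mono] by blast
  then have opp: "fan (\<not> b) \<subseteq> E - F" using intact unfolding intact_def by blast
  have "lev F (pole b) (pole (\<not> b)) = 2 * d"
    using pole_lev_opposite(2)[OF opp _ order.refl, of 0] L_bounds by simp
  then have high2: "2 * d \<le> K (ucomp F)"
    using phase_same_side[where K = K, OF pole_b root_b K] opp_in pole_lev_u0 high unfolding mem_ucomp by force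
  show "fan (\<not> b) \<subseteq> E - phase R K F"
  proof (rule fan_survives_phase[OF opp pole_b root_b])
    show "reach {..<n} (E - F) (pole b) (enc (spoke (\<not> b) i j))" if "i < L" "j \<le> d" for i j
      using pole_lev_opposite(1)[OF opp that] .
    show "\<not> level_cut R (K (ucomp F)) (lev F (pole b))
        {enc (spoke (\<not> b) i j), enc (spoke (\<not> b) i (Suc j))}" if "i < L" "j < d" for i j
      using pole_lev_opposite(2)[OF opp that(1), of j] pole_lev_opposite(2)[OF opp that(1), of "Suc j"]
        that high2
      by (intro not_level_cut_below) auto
  qed
qed

lemma pole_phase_intact: "intact (phase R K F)"
  unfolding intact_def
proof (intro conjI allI impI pole_phase_keeps_cycle)
  fix b' assume in': "pole b' \<in> ucomp (phase R K F)"
  show "fan b' \<subseteq> E - phase R K F"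
  proof (cases "b' = b")
    case True
    consider "K (ucomp F) < d" | "d \<le> K (ucomp F)" by linarith
    then show ?thesis
    proof cases
      case 1
      then show ?thesis using pole_phase_below(1) in' True by simp
    next
      case 2
      then show ?thesis using pole_phase_above(1) True by simp
    qed
  next
    case False
    then have b': "b' = (\<not> b)" by simp
    have "pole (\<not> b) \<in> ucomp F"
      using subsetD[OF ucomp_antimono[OF kpr_phase_mono] in'] b' by simp
    then have opp: "fan (\<not> b) \<subseteq> E - F" using intact unfolding intact_def by blast
    consider "K (ucomp F) < d" | "d \<le> K (ucomp F)" by linarith
    then show ?thesis
    proof cases
      case 1
      then show ?thesis using pole_phase_below(2)[OF _ opp] b' by simp
    next
      case 2
      then show ?thesis using pole_phase_above(2) in' b' by simp
    qed
  qed
qed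

lemma pole_phase_keeps_a_pole:
  assumes "pole (\<not> b) \<in> ucomp F"
  shows "\<exists>b'. pole b' \<in> ucomp (phase R K F)"
proof (cases "K (ucomp F) < d")
  case True
  have "fan (\<not> b) \<subseteq> E - F" using assms intact unfolding intact_def by blast
  then show ?thesis using pole_in_ucomp[OF pole_phase_below(2)[OF True]] by blast
next
  case False
  then show ?thesis using pole_in_ucomp[OF pole_phase_above(1)] by auto
qed

end

context
  fixes F :: "nat set set" and R :: nat and K :: "nat set \<Rightarrow> nat"
  assumes cycle: "cycle_edges \<subseteq> E - F" and no_pole: "\<forall>b. pole b \<notin> ucomp F"
    and R: "2 * d < R" and K: "K (ucomp F) < R"
begin

lemma w0_root: "root (ucomp F) = w0"
  using no_pole w0_in_ucomp[OF cycle] unfolding root_def by simp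

lemma w_lev_lower:
  assumes "reach {..<n} (E - F) w0 (enc x)" "x \<in> verts"
  shows "cyc_pot (d + h) x \<le> lev F w0 (enc x)"
  using potential_le_gdist_enc[of "cyc_pot (d + h)", OF cyc_pot_arc, of F "Cyc (d + h)" x]
    assms L_bounds unfolding w0_def by (simp add: cyc_pot_def cdist_def)

lemma w_lev_far:
  assumes "d \<le> k" "k \<le> L"
  shows "reach {..<n} (E - F) w0 (enc (Cyc (k mod L))) \<and> lev F w0 (enc (Cyc (k mod L))) \<le> h"
proof (cases "k \<le> d + h")
  case True
  then have kL: "k < L" and k: "k mod L = k" "(k + (d + h - k)) mod L = d + h"
    using L_bounds by auto
  note to_w0 = reach_cycle[OF cycle kL, of "d + h - k", unfolded k(2) w0_def[symmetric]]
  show ?thesis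
    using reach_sym[OF to_w0(1) E_Diff_wf] gdist_commute_le[OF to_w0(1) E_Diff_wf] to_w0(2)
      kL k(1) assms by simp
next
  case False
  then have "(d + h + (k - (d + h))) mod L = k mod L" "k - (d + h) \<le> h"
    using assms(2) unfolding L_def by auto
  then show ?thesis
    using reach_cycle[OF cycle, of "d + h" "k - (d + h)"] L_bounds unfolding w0_def by auto
qed

lemma w_lev_near:
  assumes "i \<le> d"
  shows "reach {..<n} (E - F) w0 (enc (Cyc i))" "h \<le> lev F w0 (enc (Cyc i))"
    "lev F w0 (enc (Cyc i)) \<le> 2 * d"
proof -
  have eq: "d + h + (h + i) = i + L" unfolding L_def by simp
  have "(d + h + (h + i)) mod L = i" unfolding eq using assms L_bounds by simp
  then have walk: "reach {..<n} (E - F) w0 (enc (Cyc i))" "lev F w0 (enc (Cyc i)) \<le> h + i"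
    using reach_cycle[OF cycle, of "d + h" "h + i"] L_bounds unfolding w0_def by auto
  show "reach {..<n} (E - F) w0 (enc (Cyc i))" using walk(1) .
  show "lev F w0 (enc (Cyc i)) \<le> 2 * d" using walk(2) assms h_bounds by simp
  have "h \<le> cdist (d + h) i" unfolding cdist_def Let_def using assms L_bounds unfolding L_def by auto
  then show "h \<le> lev F w0 (enc (Cyc i))"
    using w_lev_lower[OF walk(1)] assms L_bounds by (simp add: cyc_pot_def)
qed

lemma w_cycle_edge_survives:
  assumes "i < L" "\<forall>x\<in>{enc (Cyc i), enc (Cyc (Suc i mod L))}. reach {..<n} (E - F) w0 x"
    "\<not> level_cut R (K (ucomp F)) (lev F w0) {enc (Cyc i), enc (Cyc (Suc i mod L))}"
  shows "{enc (Cyc i), enc (Cyc (Suc i mod L))} \<in> E - phase R K F"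
proof (rule edge_survives_phase[where K = K, OF _ w0_in_ucomp[OF cycle] w0_root assms(2,3)])
  show "{enc (Cyc i), enc (Cyc (Suc i mod L))} \<in> E - F"
    using cycle assms(1) unfolding cycle_edges_def by blast
qed

lemma w_phase_reach: "reach {..<n} (E - phase R K F) u0 v0"
proof (cases "K (ucomp F) < h")
  case True
  have "reach {..<n} (E - phase R K F) (enc (Cyc 0)) (enc (Cyc ((0 + d) mod L)))"
  proof (rule reach_around_cycle)
    fix k assume k: "k < d"
    then have idx: "(0 + k) mod L = k" "Suc k mod L = Suc k" using L_bounds by auto
    have "\<not> level_cut R (K (ucomp F)) (lev F w0) {enc (Cyc k), enc (Cyc (Suc k mod L))}"
      using w_lev_near[of k] w_lev_near[of "Suc k"] k True R idx
      by (intro not_level_cut_above) auto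
    then show "{enc (Cyc ((0 + k) mod L)), enc (Cyc (Suc ((0 + k) mod L) mod L))} \<in> E - phase R K F"
      using w_cycle_edge_survives[of k] w_lev_near(1)[of k] w_lev_near(1)[of "Suc k"] k idx L_bounds
      by simp
  qed (use L_bounds in simp)
  then show ?thesis using L_bounds unfolding u0_def v0_def by simp
next
  case False
  have dL: "d < L" using L_bounds by simp
  have "reach {..<n} (E - phase R K F) (enc (Cyc d)) (enc (Cyc ((d + 2 * h) mod L)))"
  proof (rule reach_around_cycle[OF _ dL])
    fix k assume k: "k < 2 * h"
    then have idx: "(d + k) mod L = d + k" "Suc (d + k) \<le> L" unfolding L_def by auto
    have "\<not> level_cut R (K (ucomp F)) (lev F w0) {enc (Cyc (d + k)), enc (Cyc (Suc (d + k) mod L))}"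
      using w_lev_far[of "d + k"] w_lev_far[of "Suc (d + k)"] idx False
      by (intro not_level_cut_below) auto
    then show "{enc (Cyc ((d + k) mod L)), enc (Cyc (Suc ((d + k) mod L) mod L))} \<in> E - phase R K F"
      using w_cycle_edge_survives[of "d + k"] w_lev_far[of "d + k"] w_lev_far[of "Suc (d + k)"]
        idx by simp
  qed
  then have "reach {..<n} (E - phase R K F) v0 u0" unfolding u0_def v0_def L_def by simp
  then show ?thesis using reach_sym[OF _ E_Diff_wf] v0_in by simp
qed

end

lemma kpr_keeps_u0_v0:
  assumes R: "2 * d < R" and K: "\<forall>C. K1 C < R \<and> K2 C < R \<and> K3 C < R"
  shows "reach {..<n} (E - kpr_removed {..<n} E R root K1 K2 K3) u0 v0"
proof -
  define F1 where "F1 = phase R K1 {}"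
  define F2 where "F2 = phase R K2 F1"
  have intact0: "intact {}" unfolding intact_def using cycle_edges_subset_E fan_subset_E by auto
  have poles0: "pole b \<in> ucomp {}" for b using pole_in_ucomp fan_subset_E by simp
  have root0: "root (ucomp {}) = pole True" using poles0 unfolding root_def by simp
  have "intact F1" "\<exists>b. pole b \<in> ucomp F1"
    using pole_phase_intact[OF intact0 poles0 root0 R] pole_phase_keeps_a_pole[OF intact0 poles0 root0 R]
      poles0 K unfolding F1_def by auto
  then have intact2: "intact F2"
    using root_pole pole_phase_intact R K unfolding F2_def by metis
  show ?thesis
  proof (cases "\<exists>b. pole b \<in> ucomp F2")
    case True
    then have "intact (phase R K3 F2)"
      using root_pole pole_phase_intact[OF intact2] R K by metis
    then have "cycle_edges \<subseteq> E - phase R K3 F2" unfolding intact_def by blast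
    from reach_cycle(1)[OF this, of 0 d] show ?thesis
      using L_bounds unfolding kpr_removed_def F2_def F1_def u0_def v0_def by simp
  next
    case False
    then show ?thesis
      using w_phase_reach[OF _ _ R] intact2 K unfolding kpr_removed_def F2_def F1_def intact_def by blast
  qed
qed

lemma reach_from_u0:
  assumes "x < n"
  shows "reach {..<n} E u0 x"
proof -
  have L0: "0 < L" using L_bounds by simp
  have cyc: "reach {..<n} E u0 (enc (Cyc i))" if "i < L" for i
    using reach_cycle(1)[OF cycle_edges_subset_E L0, of i] that unfolding u0_def by simp
  have spk: "reach {..<n} E u0 (enc (spoke b i j))" if "i < L" "j \<le> d" for b i j
    using reach_trans[OF cyc[OF that(1)] reach_spoke_from_cycle(1)[OF fan_subset_E that]] .
  obtain a where a: "a \<in> verts" "x = enc a" using enc_surj assms by blast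
  show ?thesis
  proof (cases a)
    case (Cyc i)
    then show ?thesis using a cyc by simp
  next
    case (Spoke b i j)
    then show ?thesis using a spk[of i j b] by (simp add: spoke_def)
  next
    case (Pole b)
    then show ?thesis using a spk[OF L0, of d b] by simp
  next
    case (Tail j)
    then have j: "j < tail_len" using a by simp
    have "{enc (south k), enc (south (Suc k))} \<in> E" if "k < Suc j" for k
      using E_edge[OF south_arc] that j by simp
    moreover have "enc (south k) \<in> {..<n}" if "k \<le> Suc j" for k
      using south_in_verts that j by simp
    ultimately have "reach {..<n} E (enc (south 0)) (enc (south (Suc j)))"
      by (rule reach_along[of "Suc j" "\<lambda>k. enc (south k)"])
    moreover have "reach {..<n} E u0 (enc (south 0))" using spk[OF L0, of d False] by (simp add: south_def)
    ultimately show ?thesis using reach_trans a Tail by (simp add: south_def)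
  qed
qed

lemma connected: "connected_graph {..<n} E"
  unfolding connected_graph_def
proof (intro ballI)
  fix x y assume "x \<in> {..<n}" "y \<in> {..<n}"
  then have "reach {..<n} E x u0" "reach {..<n} E u0 y"
    using reach_sym[OF reach_from_u0 E_wf] u0_in reach_from_u0 by auto
  then show "reach {..<n} E x y" by (rule reach_trans)
qed

lemma simple: "simple_graph {..<n} E"
  unfolding simple_graph_def
proof (intro conjI ballI)
  fix e assume "e \<in> E"
  then show "e \<subseteq> {..<n}" using E_wf by blast
  obtain a c where "(a, c) \<in> arcs" "e = {enc a, enc c}" using \<open>e \<in> E\<close> unfolding E_def by auto
  then show "card e = 2" using arcs_in_verts enc_eq_iff by (simp add: card_insert_if)
qed simp

lemma gdist_u0_v0: "gdist {..<n} E u0 v0 = d"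
proof -
  have dL: "d < L" and L0: "0 < L" using L_bounds by simp_all
  have walk: "reach {..<n} (E - {}) u0 v0" "gdist {..<n} (E - {}) u0 v0 \<le> d"
    using reach_cycle[of "E - {}" 0 d] cycle_edges_subset_E L0 dL unfolding u0_def v0_def by simp_all
  have "cyc_pot 0 (Cyc d) \<le> cyc_pot 0 (Cyc 0) + gdist {..<n} (E - {}) u0 v0"
    using potential_le_gdist_enc[of "cyc_pot 0" "{}" "Cyc 0" "Cyc d", OF cyc_pot_arc[OF L0]] walk dL
    unfolding u0_def v0_def by simp
  moreover have "cyc_pot 0 (Cyc d) = d" "cyc_pot 0 (Cyc 0) = 0"
    unfolding cyc_pot_def cdist_def using L_bounds by auto
  ultimately show ?thesis using walk by simp
qed

end

section \<open>Planar drawings\<close>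

text \<open>A vertex lying on a foreign edge would be a crossing point of two edges, so it suffices to
  control crossings, provided no vertex is isolated.\<close>

lemma planar_graph_no_isolated:
  fixes pos :: "'a \<Rightarrow> complex" and g :: "'a set \<Rightarrow> real \<Rightarrow> complex"
  assumes inj: "inj_on pos V" and in_V: "\<forall>e\<in>E. e \<subseteq> V" and covered: "\<forall>x\<in>V. \<exists>e\<in>E. x \<in> e"
    and ends: "\<forall>e\<in>E. arc (g e) \<and> {pathstart (g e), pathfinish (g e)} = pos ` e"
    and cross: "\<forall>e\<in>E. \<forall>e'\<in>E. e \<noteq> e' \<longrightarrow> path_image (g e) \<inter> path_image (g e') \<subseteq> pos ` (e \<inter> e')"
  shows "planar_graph V E"
  unfolding planar_graph_def
proof (intro exI[of _ pos] exI[of _ g] conjI inj ends cross ballI impI)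
  fix e x assume e: "e \<in> E" and x: "x \<in> V" "pos x \<in> path_image (g e)"
  obtain e' where e': "e' \<in> E" "x \<in> e'" using covered x(1) by blast
  have "pos x \<in> {pathstart (g e'), pathfinish (g e')}" using ends e' by auto
  then have on_e': "pos x \<in> path_image (g e')"
    using pathstart_in_path_image[of "g e'"] pathfinish_in_path_image[of "g e'"] by auto
  show "x \<in> e"
  proof (cases "e = e'")
    case False
    then obtain y where y: "y \<in> e \<inter> e'" "pos x = pos y"
      using cross e e'(1) x(2) on_e' by blast
    then have "y \<in> V" using in_V e by blast
    then show ?thesis using inj_onD[OF inj y(2) x(1)] y(1) by simp
  qed (use e' in simp)
qed

lemma planar_graph_by_arcs:
  fixes pos :: "'a \<Rightarrow> complex" and \<gamma> :: "'a \<Rightarrow> 'a \<Rightarrow> real \<Rightarrow> complex"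
  assumes E: "E = (\<lambda>(a, c). {a, c}) ` P"
    and covered: "\<And>x. x \<in> V \<Longrightarrow> \<exists>(a, c)\<in>P. x = a \<or> x = c"
    and in_V: "\<And>a c. (a, c) \<in> P \<Longrightarrow> a \<in> V \<and> c \<in> V"
    and inj: "inj_on pos V"
    and arc: "\<And>a c. (a, c) \<in> P \<Longrightarrow>
      arc (\<gamma> a c) \<and> pathstart (\<gamma> a c) = pos a \<and> pathfinish (\<gamma> a c) = pos c"
    and meet: "\<And>a c a' c'. (a, c) \<in> P \<Longrightarrow> (a', c') \<in> P \<Longrightarrow> {a, c} \<noteq> {a', c'} \<Longrightarrow>
      path_image (\<gamma> a c) \<inter> path_image (\<gamma> a' c') \<subseteq> pos ` ({a, c} \<inter> {a', c'})"
  shows "planar_graph V E"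
proof -
  define sel where "sel e = (SOME p. p \<in> P \<and> e = {fst p, snd p})" for e
  define g where "g e = \<gamma> (fst (sel e)) (snd (sel e))" for e
  have sel: "\<exists>a c. (a, c) \<in> P \<and> e = {a, c} \<and> g e = \<gamma> a c" if "e \<in> E" for e
  proof -
    have "\<exists>p. p \<in> P \<and> e = {fst p, snd p}" using that unfolding E by auto
    then have "sel e \<in> P \<and> e = {fst (sel e), snd (sel e)}" unfolding sel_def by (rule someI_ex)
    then show ?thesis unfolding g_def by (intro exI[of _ "fst (sel e)"] exI[of _ "snd (sel e)"]) simp
  qed
  have edge: "{a, c} \<in> E" if "(a, c) \<in> P" for a c using that unfolding E by force
  show ?thesis
  proof (rule planar_graph_no_isolated[OF inj]; intro ballI impI)
    fix e assume "e \<in> E"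
    then obtain a c where "(a, c) \<in> P" "e = {a, c}" "g e = \<gamma> a c" using sel by blast
    then show "e \<subseteq> V" "arc (g e) \<and> {pathstart (g e), pathfinish (g e)} = pos ` e"
      using in_V[of a c] arc[of a c] by simp_all
  next
    fix x assume "x \<in> V"
    then obtain a c where "(a, c) \<in> P" "x = a \<or> x = c" using covered by blast
    then show "\<exists>e\<in>E. x \<in> e" using edge by blast
  next
    fix e e' assume "e \<in> E" "e' \<in> E" "e \<noteq> e'"
    moreover obtain a c where "(a, c) \<in> P" "e = {a, c}" "g e = \<gamma> a c" using sel \<open>e \<in> E\<close> by blast
    moreover obtain a' c' where "(a', c') \<in> P" "e' = {a', c'}" "g e' = \<gamma> a' c'"
      using sel \<open>e' \<in> E\<close> by blast
    ultimately show "path_image (g e) \<inter> path_image (g e') \<subseteq> pos ` (e \<inter> e')"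
      using meet[of a c a' c'] by simp
  qed
qed

lemma planar_graph_bij_image:
  assumes planar: "planar_graph A F" and bij: "bij_betw f A V" and in_A: "\<forall>e\<in>F. e \<subseteq> A"
  shows "planar_graph V ((`) f ` F)"
proof -
  obtain pos :: "'a \<Rightarrow> complex" and \<gamma> :: "'a set \<Rightarrow> real \<Rightarrow> complex" where pos: "inj_on pos A"
    and ends: "\<forall>e\<in>F. arc (\<gamma> e) \<and> {pathstart (\<gamma> e), pathfinish (\<gamma> e)} = pos ` e"
    and vert: "\<forall>e\<in>F. \<forall>x\<in>A. pos x \<in> path_image (\<gamma> e) \<longrightarrow> x \<in> e"
    and cross: "\<forall>e\<in>F. \<forall>e'\<in>F. e \<noteq> e' \<longrightarrow> path_image (\<gamma> e) \<inter> path_image (\<gamma> e') \<subseteq> pos ` (e \<inter> e')"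
    using planar unfolding planar_graph_def by (elim exE conjE) (rule that)
  define g where "g = inv_into A f"
  have g: "g (f a) = a" if "a \<in> A" for a
    using bij that unfolding g_def by (simp add: bij_betw_def inv_into_f_f)
  have V: "V = f ` A" using bij by (simp add: bij_betw_def)
  have g_image: "g ` f ` s = s" if "s \<subseteq> A" for s
    using bij that unfolding g_def by (simp add: bij_betw_def)
  have pos_g: "(pos \<circ> g) ` f ` s = pos ` s" if "s \<subseteq> A" for s
    using g_image[OF that] image_comp[of pos g "f ` s"] by simp
  have inter: "f ` e \<inter> f ` e' = f ` (e \<inter> e')" if "e \<in> F" "e' \<in> F" for e e'
    using inj_on_image_Int[of f A e e'] bij in_A that by (simp add: bij_betw_def)
  show ?thesis unfolding planar_graph_def
  proof (intro exI[of _ "pos \<circ> g"] exI[of _ "\<lambda>e. \<gamma> (g ` e)"] conjI ballI impI)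
    show "inj_on (pos \<circ> g) V"
      unfolding V inj_on_def using pos g by (auto dest: inj_onD)
  next
    fix e' assume "e' \<in> (`) f ` F"
    then obtain e where e: "e \<in> F" "e' = f ` e" by blast
    then show "arc (\<gamma> (g ` e'))" "{pathstart (\<gamma> (g ` e')), pathfinish (\<gamma> (g ` e'))} = (pos \<circ> g) ` e'"
      using ends g_image pos_g in_A by simp_all
  next
    fix e' x assume "e' \<in> (`) f ` F" "x \<in> V" "(pos \<circ> g) x \<in> path_image (\<gamma> (g ` e'))"
    moreover obtain e where e: "e \<in> F" "e' = f ` e" using \<open>e' \<in> (`) f ` F\<close> by blast
    moreover obtain a where "a \<in> A" "x = f a" using \<open>x \<in> V\<close> unfolding V by blast
    ultimately have "pos a \<in> path_image (\<gamma> e)" using g g_image in_A by simp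
    then show "x \<in> e'" using vert e \<open>a \<in> A\<close> \<open>x = f a\<close> by blast
  next
    fix e' d' assume "e' \<in> (`) f ` F" "d' \<in> (`) f ` F" "e' \<noteq> d'"
    then obtain e d where e: "e \<in> F" "e' = f ` e" and d: "d \<in> F" "d' = f ` d" by blast
    then have "e \<noteq> d" using \<open>e' \<noteq> d'\<close> by blast
    then have "path_image (\<gamma> e) \<inter> path_image (\<gamma> d) \<subseteq> pos ` (e \<inter> d)" using cross e d by blast
    also have "\<dots> = (pos \<circ> g) ` (e' \<inter> d')"
      unfolding e(2) d(2) inter[OF e(1) d(1)] by (rule pos_g[symmetric]) (use in_A e(1) in blast)
    finally show "path_image (\<gamma> (g ` e')) \<inter> path_image (\<gamma> (g ` d')) \<subseteq> (pos \<circ> g) ` (e' \<inter> d')"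
      using e d g_image in_A by simp
  qed
qed

section \<open>A planar drawing of \<open>G\<^sub>d\<close>\<close>

lemma closed_segment_Re_Im:
  "z \<in> closed_segment a b \<Longrightarrow>
    \<exists>u. 0 \<le> u \<and> u \<le> 1 \<and> Re z = (1 - u) * Re a + u * Re b \<and> Im z = (1 - u) * Im a + u * Im b"
  by (auto simp: closed_segment_def)

context double_wheel
begin

text \<open>The drawing: cycle vertices at \<open>0, 1, \<dots>, L - 1\<close> on the real axis, spoke \<open>(b, i)\<close> running straight
  from \<open>Cyc i\<close> to \<open>Pole b = (X, \<plusminus>d)\<close> with its vertices evenly spaced, the tail hanging straight down
  from \<open>Pole False\<close>, and the closing cycle edge taken around everything above the North pole.\<close>

definition X :: real where "X = (real L - 1) / 2"

definition side :: "bool \<Rightarrow> real" where "side b = (if b then 1 else -1)"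

definition spoke_pt :: "bool \<Rightarrow> nat \<Rightarrow> real \<Rightarrow> complex" where
  "spoke_pt b i t = Complex (real i + t * (X - real i)) (side b * t * real d)"

definition pos :: "gvertex \<Rightarrow> complex" where
  "pos x = (case x of
       Cyc i \<Rightarrow> Complex (real i) 0
     | Spoke b i j \<Rightarrow> spoke_pt b i (real j / real d)
     | Pole b \<Rightarrow> Complex X (side b * real d)
     | Tail j \<Rightarrow> Complex X (- real d - 1 - real j))"

definition ne_corner :: complex where "ne_corner = Complex (real L) (real d + 1)"
definition nw_corner :: complex where "nw_corner = Complex (-1) (real d + 1)"

definition closing :: "real \<Rightarrow> complex" where
  "closing = linepath (pos (Cyc (L - 1))) ne_corner
     +++ (linepath ne_corner nw_corner +++ linepath nw_corner (pos (Cyc 0)))"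

definition drawn :: "gvertex \<Rightarrow> gvertex \<Rightarrow> real \<Rightarrow> complex" where
  "drawn a c = (if a = Cyc (L - 1) \<and> c = Cyc 0 then closing else linepath (pos a) (pos c))"

lemma real_d_ge_1: "1 \<le> real d"
  using d_pos by simp

lemma X_bounds: "1 \<le> X" "X < real L - 1"
  unfolding X_def using L_bounds by auto

lemma side_nonzero: "side b \<noteq> 0"
  unfolding side_def by simp

lemma Re_spoke_pt: "Re (spoke_pt b i t) = real i + t * (X - real i)"
  and Im_spoke_pt: "Im (spoke_pt b i t) = side b * t * real d"
  unfolding spoke_pt_def by simp_all

lemma pos_Cyc: "pos (Cyc i) = Complex (real i) 0"
  unfolding pos_def by simp

lemma pos_spoke: "j \<le> d \<Longrightarrow> pos (spoke b i j) = spoke_pt b i (real j / real d)"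
  unfolding pos_def spoke_def spoke_pt_def side_def using d_pos by auto

lemma spoke_pt_0: "spoke_pt b i 0 = pos (Cyc i)"
  and spoke_pt_1: "spoke_pt b i 1 = pos (Pole b)"
  unfolding spoke_pt_def pos_def by simp_all

lemma spoke_pt_bounds:
  assumes "i < L" "0 \<le> t" "t \<le> 1"
  shows "0 \<le> Re (spoke_pt b i t)" "Re (spoke_pt b i t) \<le> real L - 1"
    "\<bar>Im (spoke_pt b i t)\<bar> = t * real d"
proof -
  have Re: "Re (spoke_pt b i t) = (1 - t) * real i + t * X"
    unfolding Re_spoke_pt by (simp add: algebra_simps)
  show "0 \<le> Re (spoke_pt b i t)" unfolding Re using assms X_bounds by simp
  have "(1 - t) * real i \<le> (1 - t) * (real L - 1)" using assms by (intro mult_left_mono) auto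
  moreover have "t * X \<le> t * (real L - 1)" using X_bounds assms by (intro mult_left_mono) auto
  ultimately show "Re (spoke_pt b i t) \<le> real L - 1" unfolding Re by (simp add: algebra_simps)
  show "\<bar>Im (spoke_pt b i t)\<bar> = t * real d"
    unfolding Im_spoke_pt side_def using assms by (auto simp: abs_mult)
qed

lemma spoke_pt_segment:
  assumes "z \<in> closed_segment (spoke_pt b i t1) (spoke_pt b i t2)" "t1 \<le> t2"
  obtains t where "t1 \<le> t" "t \<le> t2" "z = spoke_pt b i t"
proof -
  obtain u where u: "0 \<le> u" "u \<le> 1" "Re z = (1 - u) * Re (spoke_pt b i t1) + u * Re (spoke_pt b i t2)"
    "Im z = (1 - u) * Im (spoke_pt b i t1) + u * Im (spoke_pt b i t2)"
    using closed_segment_Re_Im[OF assms(1)] by blast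
  define t where "t = t1 + u * (t2 - t1)"
  have "t1 \<le> t" "t \<le> t2"
    using u assms(2) mult_left_le_one_le[of "t2 - t1" u] unfolding t_def by simp_all
  moreover have "z = spoke_pt b i t"
    using u unfolding complex_eq_iff Re_spoke_pt Im_spoke_pt t_def by (simp add: algebra_simps)
  ultimately show ?thesis by (rule that)
qed

lemma closing_right_segment:
  assumes "z \<in> closed_segment (pos (Cyc (L - 1))) ne_corner"
  shows "\<exists>u. 0 \<le> u \<and> u \<le> 1 \<and> Re z = real L - 1 + u \<and> Im z = u * (real d + 1)"
proof -
  have "real (L - 1) = real L - 1" using L_bounds by (simp add: of_nat_diff)
  then show ?thesis
    using closed_segment_Re_Im[OF assms] unfolding pos_Cyc ne_corner_def by (auto simp: algebra_simps)
qed

lemma closing_top_segment: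
  assumes "z \<in> closed_segment ne_corner nw_corner"
  shows "Im z = real d + 1"
  using closed_segment_Re_Im[OF assms] unfolding ne_corner_def nw_corner_def by (auto simp: algebra_simps)

lemma closing_left_segment:
  assumes "z \<in> closed_segment nw_corner (pos (Cyc 0))"
  shows "\<exists>u. 0 \<le> u \<and> u \<le> 1 \<and> Re z = u - 1 \<and> Im z = (1 - u) * (real d + 1)"
  using closed_segment_Re_Im[OF assms] unfolding pos_Cyc nw_corner_def by (auto simp: algebra_simps)

lemma closing_image:
  assumes "z \<in> path_image closing"
  shows "0 \<le> Im z \<and> (z = pos (Cyc (L - 1)) \<or> z = pos (Cyc 0)
    \<or> (0 < Im z \<and> (real L - 1 < Re z \<or> Re z < 0 \<or> real d < Im z)))"
proof -
  consider "z \<in> closed_segment (pos (Cyc (L - 1))) ne_corner" | "z \<in> closed_segment ne_corner nw_corner"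
    | "z \<in> closed_segment nw_corner (pos (Cyc 0))"
    using assms unfolding closing_def by (auto simp: path_image_join)
  then show ?thesis
  proof cases
    case 1
    then obtain u where u: "0 \<le> u" "u \<le> 1" "Re z = real L - 1 + u" "Im z = u * (real d + 1)"
      using closing_right_segment by blast
    show ?thesis
    proof (cases "u = 0")
      case True
      then show ?thesis using u L_bounds by (simp add: complex_eq_iff pos_Cyc of_nat_diff)
    qed (use u real_d_ge_1 in simp)
  next
    case 2
    then show ?thesis using closing_top_segment by simp
  next
    case 3
    then obtain u where u: "0 \<le> u" "u \<le> 1" "Re z = u - 1" "Im z = (1 - u) * (real d + 1)"
      using closing_left_segment by blast
    show ?thesis
    proof (cases "u = 1")
      case True
      then show ?thesis using u by (simp add: complex_eq_iff pos_Cyc)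
    qed (use u real_d_ge_1 in simp)
  qed
qed

lemma arc_closing: "arc closing"
proof -
  have arcs: "arc (linepath (pos (Cyc (L - 1))) ne_corner)" "arc (linepath ne_corner nw_corner)"
    "arc (linepath nw_corner (pos (Cyc 0)))"
    using real_d_ge_1 L_bounds by (auto simp: complex_eq_iff pos_Cyc ne_corner_def nw_corner_def)
  have top_left: "closed_segment ne_corner nw_corner \<inter> closed_segment nw_corner (pos (Cyc 0)) \<subseteq> {nw_corner}"
  proof
    fix z assume z: "z \<in> closed_segment ne_corner nw_corner \<inter> closed_segment nw_corner (pos (Cyc 0))"
    then obtain u where u: "Re z = u - 1" "Im z = (1 - u) * (real d + 1)" using closing_left_segment by blast
    moreover have "Im z = real d + 1" using z closing_top_segment by blast
    ultimately have "u * (real d + 1) = 0" by (simp add: algebra_simps)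
    then have "u = 0" using real_d_ge_1 by simp
    then show "z \<in> {nw_corner}"
      using u \<open>Im z = real d + 1\<close> by (simp add: complex_eq_iff nw_corner_def)
  qed
  have right: "closed_segment (pos (Cyc (L - 1))) ne_corner
      \<inter> (closed_segment ne_corner nw_corner \<union> closed_segment nw_corner (pos (Cyc 0))) \<subseteq> {ne_corner}"
  proof
    fix z assume z: "z \<in> closed_segment (pos (Cyc (L - 1))) ne_corner
      \<inter> (closed_segment ne_corner nw_corner \<union> closed_segment nw_corner (pos (Cyc 0)))"
    obtain u where u: "0 \<le> u" "u \<le> 1" "Re z = real L - 1 + u" "Im z = u * (real d + 1)"
      using z closing_right_segment by blast
    have "\<not> Re z \<le> 0" using u(1,3) L_bounds by simp
    then have "z \<notin> closed_segment nw_corner (pos (Cyc 0))" using closing_left_segment by force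
    then have "Im z = real d + 1" using z closing_top_segment by blast
    then have "(1 - u) * (real d + 1) = 0" using u(4) by (simp add: algebra_simps)
    then have "u = 1" using real_d_ge_1 by simp
    then show "z \<in> {ne_corner}" using u by (simp add: complex_eq_iff ne_corner_def)
  qed
  have "arc (linepath ne_corner nw_corner +++ linepath nw_corner (pos (Cyc 0)))"
    using top_left by (intro arc_join arcs(2,3)) auto
  then show ?thesis
    unfolding closing_def using right by (intro arc_join[OF arcs(1)]) (auto simp: path_image_join)
qed

lemma pos_south: "pos (south k) = Complex X (- real d - real k)"
  unfolding south_def pos_def side_def by (simp add: of_nat_diff)

lemma arcs_drawing_cases:
  assumes "(a, c) \<in> arcs"
  obtains (cycle) i where "Suc i < L" "a = Cyc i" "c = Cyc (Suc i)"
    | (closing) "a = Cyc (L - 1)" "c = Cyc 0"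
    | (spoke) b i j where "i < L" "j < d" "a = spoke b i j" "c = spoke b i (Suc j)"
    | (south) k where "a = south k" "c = south (Suc k)"
  using assms
proof (cases rule: arcs_cases)
  case (cycle i)
  then show ?thesis using that(1,2) by (cases "Suc i < L") auto
qed (use that(3,4) in blast)+

lemma cycle_edge_image:
  assumes "z \<in> path_image (drawn (Cyc i) (Cyc (Suc i)))"
  shows "Im z = 0 \<and> real i \<le> Re z \<and> Re z \<le> real i + 1"
proof -
  have "z \<in> closed_segment (Complex (real i) 0) (Complex (real (Suc i)) 0)"
    using assms unfolding drawn_def pos_Cyc by simp
  then obtain u where "0 \<le> u" "u \<le> 1" "Re z = (1 - u) * real i + u * real (Suc i)" "Im z = 0"
    using closed_segment_Re_Im by fastforce
  then show ?thesis by (simp add: algebra_simps)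
qed

lemma closing_edge_image:
  "z \<in> path_image (drawn (Cyc (L - 1)) (Cyc 0)) \<Longrightarrow> 0 \<le> Im z \<and> (z = pos (Cyc (L - 1)) \<or> z = pos (Cyc 0)
    \<or> (0 < Im z \<and> (real L - 1 < Re z \<or> Re z < 0 \<or> real d < Im z)))"
  using closing_image unfolding drawn_def by simp

lemma spoke_edge_image:
  assumes "j < d" "z \<in> path_image (drawn (spoke b i j) (spoke b i (Suc j)))"
  obtains t where "real j / real d \<le> t" "t \<le> (real j + 1) / real d" "z = spoke_pt b i t"
proof -
  have "spoke b i (Suc j) \<noteq> Cyc 0" unfolding spoke_def by simp
  then have "drawn (spoke b i j) (spoke b i (Suc j))
      = linepath (spoke_pt b i (real j / real d)) (spoke_pt b i ((real j + 1) / real d))"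
    using assms(1) pos_spoke[of j] pos_spoke[of "Suc j"] unfolding drawn_def by (simp add: add.commute)
  then have "z \<in> closed_segment (spoke_pt b i (real j / real d)) (spoke_pt b i ((real j + 1) / real d))"
    using assms(2) by simp
  moreover have "real j / real d \<le> (real j + 1) / real d" by (simp add: divide_right_mono)
  ultimately show ?thesis using that by (rule spoke_pt_segment)
qed

lemma south_edge_image:
  assumes "z \<in> path_image (drawn (south k) (south (Suc k)))"
  shows "Re z = X \<and> - real d - real k - 1 \<le> Im z \<and> Im z \<le> - real d - real k"
proof -
  have "south (Suc k) \<noteq> Cyc 0" unfolding south_def by simp
  then have "z \<in> closed_segment (Complex X (- real d - real k)) (Complex X (- real d - real (Suc k)))"
    using assms unfolding drawn_def pos_south by simp
  then obtain u where "0 \<le> u" "u \<le> 1" "Re z = (1 - u) * X + u * X"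
    "Im z = (1 - u) * (- real d - real k) + u * (- real d - real (Suc k))"
    using closed_segment_Re_Im by fastforce
  then show ?thesis by (simp add: algebra_simps)
qed

lemma spoke_param_bounds:
  assumes "real j / real d \<le> t" "t \<le> (real j + 1) / real d" "j < d"
  shows "0 \<le> t" "t \<le> 1" "t = 0 \<Longrightarrow> j = 0" "t = 1 \<Longrightarrow> Suc j = d"
proof -
  have "0 \<le> real j / real d" by simp
  then show "0 \<le> t" using assms(1) by linarith
  have "(real j + 1) / real d \<le> 1" using assms(3) by simp
  then show "t \<le> 1" using assms(2) by linarith
  show "j = 0" if "t = 0" using assms(1) that real_d_ge_1 by (simp add: divide_le_0_iff)
  show "Suc j = d" if "t = 1" using assms(2,3) that real_d_ge_1 by (simp add: le_divide_eq)
qed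

lemma spoke_pt_eq_cases:
  assumes "spoke_pt b i t = spoke_pt b' k t'" "0 \<le> t" "0 \<le> t'"
  shows "(t = 0 \<and> t' = 0 \<and> i = k) \<or> (t = 1 \<and> t' = 1 \<and> b = b') \<or> (b = b' \<and> i = k \<and> t = t')"
proof -
  have Im: "side b * t = side b' * t'" and Re: "real i + t * (X - real i) = real k + t' * (X - real k)"
    using arg_cong[OF assms(1), of Im] arg_cong[OF assms(1), of Re] real_d_ge_1
    unfolding Re_spoke_pt Im_spoke_pt by simp_all
  show ?thesis
  proof (cases "b = b'")
    case True
    then have "t = t'" using Im side_nonzero by simp
    then have "(real i - real k) * (1 - t) = 0" using Re by (simp add: algebra_simps)
    then show ?thesis using True \<open>t = t'\<close> by auto
  next
    case False
    then have "t + t' = 0" using Im unfolding side_def by (cases b) (auto simp: algebra_simps)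
    then have "t = 0" "t' = 0" using assms(2,3) by simp_all
    then show ?thesis using Re by simp
  qed
qed

definition meets_properly :: "gvertex \<Rightarrow> gvertex \<Rightarrow> gvertex \<Rightarrow> gvertex \<Rightarrow> bool" where
  "meets_properly a c a' c' \<longleftrightarrow> path_image (drawn a c) \<inter> path_image (drawn a' c') \<subseteq> pos ` ({a, c} \<inter> {a', c'})"

lemma meets_properly_commute: "meets_properly a c a' c' \<longleftrightarrow> meets_properly a' c' a c"
  unfolding meets_properly_def by (simp add: Int_commute)

lemma meets_properlyI:
  "(\<And>z. z \<in> path_image (drawn a c) \<Longrightarrow> z \<in> path_image (drawn a' c') \<Longrightarrow>
    \<exists>x\<in>{a, c} \<inter> {a', c'}. z = pos x) \<Longrightarrow> meets_properly a c a' c'"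
  unfolding meets_properly_def by blast

lemma meets_properly_cycle_cycle:
  assumes "i \<noteq> k"
  shows "meets_properly (Cyc i) (Cyc (Suc i)) (Cyc k) (Cyc (Suc k))"
proof (rule meets_properlyI)
  fix z assume "z \<in> path_image (drawn (Cyc i) (Cyc (Suc i)))" "z \<in> path_image (drawn (Cyc k) (Cyc (Suc k)))"
  from this[THEN cycle_edge_image] have "Im z = 0" and "k = Suc i \<and> Re z = real k \<or> i = Suc k \<and> Re z = real i"
    using assms by linarith+
  then show "\<exists>x\<in>{Cyc i, Cyc (Suc i)} \<inter> {Cyc k, Cyc (Suc k)}. z = pos x"
    by (auto simp: pos_Cyc complex_eq_iff)
qed

lemma meets_properly_cycle_closing:
  assumes "Suc i < L"
  shows "meets_properly (Cyc i) (Cyc (Suc i)) (Cyc (L - 1)) (Cyc 0)"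
proof (rule meets_properlyI)
  fix z assume z: "z \<in> path_image (drawn (Cyc i) (Cyc (Suc i)))" "z \<in> path_image (drawn (Cyc (L - 1)) (Cyc 0))"
  have L1: "real (L - 1) = real L - 1" using L_bounds by (simp add: of_nat_diff)
  from cycle_edge_image[OF z(1)] closing_edge_image[OF z(2)]
  have "z = pos (Cyc (L - 1)) \<and> Suc i = L - 1 \<or> z = pos (Cyc 0) \<and> i = 0"
    using assms unfolding pos_Cyc L1 by auto
  then show "\<exists>x\<in>{Cyc i, Cyc (Suc i)} \<inter> {Cyc (L - 1), Cyc 0}. z = pos x" by auto
qed

lemma meets_properly_cycle_spoke:
  assumes "j < d"
  shows "meets_properly (Cyc i) (Cyc (Suc i)) (spoke b k j) (spoke b k (Suc j))"
proof (rule meets_properlyI)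
  fix z assume z: "z \<in> path_image (drawn (Cyc i) (Cyc (Suc i)))"
    "z \<in> path_image (drawn (spoke b k j) (spoke b k (Suc j)))"
  obtain t where t: "real j / real d \<le> t" "t \<le> (real j + 1) / real d" "z = spoke_pt b k t"
    using spoke_edge_image[OF assms z(2)] by blast
  have "side b * t * real d = 0" using cycle_edge_image[OF z(1)] t(3) Im_spoke_pt by simp
  then have "t = 0" using side_nonzero real_d_ge_1 by simp
  then have "j = 0" "z = pos (Cyc k)" using spoke_param_bounds[OF t(1,2) assms] t(3) spoke_pt_0 by auto
  moreover have "k = i \<or> k = Suc i"
    using cycle_edge_image[OF z(1)] \<open>z = pos (Cyc k)\<close> unfolding pos_Cyc by simp linarith
  ultimately show "\<exists>x\<in>{Cyc i, Cyc (Suc i)} \<inter> {spoke b k j, spoke b k (Suc j)}. z = pos x" by auto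
qed

lemma meets_properly_closing_spoke:
  assumes "k < L" "j < d"
  shows "meets_properly (Cyc (L - 1)) (Cyc 0) (spoke b k j) (spoke b k (Suc j))"
proof (rule meets_properlyI)
  fix z assume z: "z \<in> path_image (drawn (Cyc (L - 1)) (Cyc 0))"
    "z \<in> path_image (drawn (spoke b k j) (spoke b k (Suc j)))"
  obtain t where t: "real j / real d \<le> t" "t \<le> (real j + 1) / real d" "z = spoke_pt b k t"
    using spoke_edge_image[OF assms(2) z(2)] by blast
  note t01 = spoke_param_bounds[OF t(1,2) assms(2)]
  have "t * real d \<le> real d" using t01 real_d_ge_1 by (simp add: mult_left_le_one_le)
  then have corner: "z = pos (Cyc (L - 1)) \<or> z = pos (Cyc 0)"
    using closing_edge_image[OF z(1)] spoke_pt_bounds[OF assms(1) t01(1,2), of b] t(3) by auto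
  then have "Im z = 0" by (auto simp: pos_Cyc)
  then have "t = 0" using t(3) side_nonzero real_d_ge_1 by (simp add: Im_spoke_pt)
  then have "j = 0" "z = pos (Cyc k)" using t01 t(3) spoke_pt_0 by auto
  moreover have "k = L - 1 \<or> k = 0"
    using corner \<open>z = pos (Cyc k)\<close> L_bounds by (auto simp: pos_Cyc of_nat_diff)
  ultimately show "\<exists>x\<in>{Cyc (L - 1), Cyc 0} \<inter> {spoke b k j, spoke b k (Suc j)}. z = pos x" by auto
qed

lemma meets_properly_spoke_spoke:
  assumes "i < L" "k < L" "j < d" "j' < d"
    "{spoke b i j, spoke b i (Suc j)} \<noteq> {spoke b' k j', spoke b' k (Suc j')}"
  shows "meets_properly (spoke b i j) (spoke b i (Suc j)) (spoke b' k j') (spoke b' k (Suc j'))"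
proof (rule meets_properlyI)
  fix z assume z: "z \<in> path_image (drawn (spoke b i j) (spoke b i (Suc j)))"
    "z \<in> path_image (drawn (spoke b' k j') (spoke b' k (Suc j')))"
  obtain t where t: "real j / real d \<le> t" "t \<le> (real j + 1) / real d" "z = spoke_pt b i t"
    using spoke_edge_image[OF assms(3) z(1)] by blast
  obtain t' where t': "real j' / real d \<le> t'" "t' \<le> (real j' + 1) / real d" "z = spoke_pt b' k t'"
    using spoke_edge_image[OF assms(4) z(2)] by blast
  note p = spoke_param_bounds[OF t(1,2) assms(3)] and p' = spoke_param_bounds[OF t'(1,2) assms(4)]
  from spoke_pt_eq_cases[of b i t b' k t'] t(3) t'(3) p(1) p'(1)
  consider "t = 0" "t' = 0" "i = k" | "t = 1" "t' = 1" "b = b'" | "b = b'" "i = k" "t = t'" by auto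
  then show "\<exists>x\<in>{spoke b i j, spoke b i (Suc j)} \<inter> {spoke b' k j', spoke b' k (Suc j')}. z = pos x"
  proof cases
    case 1
    then show ?thesis using p(3) p'(3) t(3) spoke_pt_0 by auto
  next
    case 2
    then have "spoke b i (Suc j) = Pole b" "spoke b' k (Suc j') = Pole b" "z = pos (Pole b)"
      using p(4) p'(4) t(3) spoke_pt_1 by auto
    then show ?thesis by (intro bexI[of _ "Pole b"]) auto
  next
    case 3
    then have "j \<noteq> j'" using assms(5) by auto
    then have "j' = Suc j \<or> j = Suc j'" "t * real d = real (max j j')"
      using t(1,2) t'(1,2) 3 real_d_ge_1 by (auto simp: field_simps)
    then have "t = real (max j j') / real d" using real_d_ge_1 by (simp add: field_simps)
    then have "z = pos (spoke b i (max j j'))"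
      using t(3) pos_spoke[of "max j j'"] assms(3,4) by simp
    then show ?thesis using 3 \<open>j' = Suc j \<or> j = Suc j'\<close> by (auto simp: max_def)
  qed
qed

lemma meets_properly_spoke_south:
  assumes "j < d"
  shows "meets_properly (spoke b i j) (spoke b i (Suc j)) (south k) (south (Suc k))"
proof (rule meets_properlyI)
  fix z assume z: "z \<in> path_image (drawn (spoke b i j) (spoke b i (Suc j)))"
    "z \<in> path_image (drawn (south k) (south (Suc k)))"
  obtain t where t: "real j / real d \<le> t" "t \<le> (real j + 1) / real d" "z = spoke_pt b i t"
    using spoke_edge_image[OF assms z(1)] by blast
  note p = spoke_param_bounds[OF t(1,2) assms]
  have td: "0 \<le> t * real d" "t * real d \<le> real d"
    using p(1,2) real_d_ge_1 by (simp_all add: mult_left_le_one_le)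
  have Im: "Im z = side b * (t * real d)" by (simp add: t(3) Im_spoke_pt)
  note south = south_edge_image[OF z(2)]
  have b: "b = False"
  proof (rule ccontr)
    assume "b \<noteq> False"
    then have "Im z = t * real d" using Im by (simp add: side_def)
    then show False using south td real_d_ge_1 by linarith
  qed
  then have "Im z = - (t * real d)" using Im by (simp add: side_def)
  then have "k = 0" "t * real d = real d" using south td of_nat_0_le_iff[of k] by linarith+
  then have "t = 1" using real_d_ge_1 by simp
  then have "Suc j = d" "z = pos (south 0)" using p(4) t(3) spoke_pt_1 b by (auto simp: south_def)
  then show "\<exists>x\<in>{spoke b i j, spoke b i (Suc j)} \<inter> {south k, south (Suc k)}. z = pos x"
    using \<open>k = 0\<close> b by (auto simp: south_def)
qed

lemma meets_properly_south_south:
  assumes "k \<noteq> k'"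
  shows "meets_properly (south k) (south (Suc k)) (south k') (south (Suc k'))"
proof (rule meets_properlyI)
  fix z assume "z \<in> path_image (drawn (south k) (south (Suc k)))"
    "z \<in> path_image (drawn (south k') (south (Suc k')))"
  from this[THEN south_edge_image] have "Re z = X"
    and "k' = Suc k \<and> Im z = - real d - real k' \<or> k = Suc k' \<and> Im z = - real d - real k"
    using assms by linarith+
  then show "\<exists>x\<in>{south k, south (Suc k)} \<inter> {south k', south (Suc k')}. z = pos x"
    by (auto simp: pos_south complex_eq_iff)
qed

lemma meets_properly_cycle_south: "meets_properly (Cyc i) (Cyc (Suc i)) (south k) (south (Suc k))"
  using cycle_edge_image south_edge_image real_d_ge_1 unfolding meets_properly_def by fastforce

lemma meets_properly_closing_south: "meets_properly (Cyc (L - 1)) (Cyc 0) (south k) (south (Suc k))"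
  using closing_edge_image south_edge_image real_d_ge_1 unfolding meets_properly_def by fastforce

lemma meets_properly_cycle_arc:
  assumes "Suc i < L" "(a, c) \<in> arcs" "{Cyc i, Cyc (Suc i)} \<noteq> {a, c}"
  shows "meets_properly (Cyc i) (Cyc (Suc i)) a c"
  using assms(2)
proof (cases rule: arcs_drawing_cases)
  case (cycle k)
  then have "i \<noteq> k" using assms(3) by blast
  then show ?thesis using cycle meets_properly_cycle_cycle by simp
qed (use assms(1) meets_properly_cycle_closing meets_properly_cycle_spoke meets_properly_cycle_south
  in simp_all)

lemma meets_properly_closing_arc:
  assumes "(a, c) \<in> arcs" "{Cyc (L - 1), Cyc 0} \<noteq> {a, c}"
  shows "meets_properly (Cyc (L - 1)) (Cyc 0) a c"
  using assms(1)
proof (cases rule: arcs_drawing_cases)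
  case (cycle k)
  then show ?thesis using meets_properly_cycle_closing meets_properly_commute by simp
qed (use assms(2) meets_properly_closing_spoke meets_properly_closing_south in simp_all)

lemma meets_properly_spoke_arc:
  assumes "i < L" "j < d" "(a, c) \<in> arcs" "{spoke b i j, spoke b i (Suc j)} \<noteq> {a, c}"
  shows "meets_properly (spoke b i j) (spoke b i (Suc j)) a c"
  using assms(3)
proof (cases rule: arcs_drawing_cases)
  case (cycle k)
  then show ?thesis using meets_properly_cycle_spoke[OF assms(2)] meets_properly_commute by simp
next
  case closing
  then show ?thesis using meets_properly_closing_spoke[OF assms(1,2)] meets_properly_commute by simp
next
  case (spoke b' k j')
  then show ?thesis using meets_properly_spoke_spoke assms by simp
next
  case (south k)
  then show ?thesis using meets_properly_spoke_south[OF assms(2)] by simp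
qed

lemma arcs_meet_properly:
  assumes "(a, c) \<in> arcs" "(a', c') \<in> arcs" "{a, c} \<noteq> {a', c'}"
  shows "meets_properly a c a' c'"
  using assms(1)
proof (cases rule: arcs_drawing_cases)
  case (cycle i)
  then show ?thesis using meets_properly_cycle_arc assms(2,3) by simp
next
  case closing
  then show ?thesis using meets_properly_closing_arc assms(2,3) by simp
next
  case (spoke b i j)
  then show ?thesis using meets_properly_spoke_arc assms(2,3) by simp
next
  case (south k)
  from assms(2) show ?thesis
  proof (cases rule: arcs_drawing_cases)
    case (south k')
    then have "k \<noteq> k'" using \<open>a = south k\<close> \<open>c = _\<close> assms(3) by blast
    then show ?thesis using south \<open>a = south k\<close> \<open>c = _\<close> meets_properly_south_south by simp
  qed (use south meets_properly_commute meets_properly_cycle_south meets_properly_closing_south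
      meets_properly_spoke_south in simp_all)
qed

lemma verts_on_spokes:
  assumes "x \<in> verts"
  shows "(\<exists>b i j. i < L \<and> j \<le> d \<and> x = spoke b i j) \<or> (\<exists>k. x = Tail k)"
proof (cases x)
  case (Cyc i)
  then show ?thesis using assms by (intro disjI1 exI[of _ True] exI[of _ i] exI[of _ 0]) simp
next
  case (Spoke b i j)
  then show ?thesis using assms by (intro disjI1 exI[of _ b] exI[of _ i] exI[of _ j]) (simp add: spoke_def)
next
  case (Pole b)
  then show ?thesis using L_bounds by (intro disjI1 exI[of _ b] exI[of _ 0] exI[of _ d]) simp
qed simp

lemma pos_spoke_eq:
  assumes "j \<le> d" "j' \<le> d" "pos (spoke b i j) = pos (spoke b' k j')"
  shows "spoke b i j = spoke b' k j'"
proof -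
  have "spoke_pt b i (real j / real d) = spoke_pt b' k (real j' / real d)"
    using assms pos_spoke by simp
  from spoke_pt_eq_cases[OF this] have
    "(j = 0 \<and> j' = 0 \<and> i = k) \<or> (d = j \<and> d = j' \<and> b = b') \<or> (b = b' \<and> i = k \<and> j = j')"
    using d_pos by simp
  then consider "j = 0" "j' = 0" "i = k" | (pole) "d = j" "d = j'" "b = b'" | "b = b'" "i = k" "j = j'"
    by blast
  then show ?thesis
  proof cases
    case pole
    then show ?thesis unfolding pole(1,2)[symmetric] pole(3) by simp
  qed simp_all
qed

lemma Im_pos_spoke_ge:
  assumes "j \<le> d"
  shows "- real d \<le> Im (pos (spoke b i j))"
proof -
  have "Im (pos (spoke b i j)) = side b * real j" using pos_spoke[OF assms] real_d_ge_1 by (simp add: Im_spoke_pt)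
  moreover have "real j \<le> real d" using assms by simp
  ultimately show ?thesis unfolding side_def by simp
qed

lemma Im_pos_Tail: "Im (pos (Tail k)) = - real d - 1 - real k"
  by (simp add: pos_def)

lemma inj_on_pos: "inj_on pos verts"
proof (rule inj_onI)
  fix x y assume x: "x \<in> verts" and y: "y \<in> verts" and eq: "pos x = pos y"
  have tail: "- real d - 1 - real k < - real d" for k by simp
  show "x = y"
  proof (cases "\<exists>k. x = Tail k")
    case True
    then obtain k where k: "x = Tail k" by blast
    show ?thesis
    proof (cases "\<exists>k'. y = Tail k'")
      case True
      then obtain k' where k': "y = Tail k'" by blast
      have "Im (pos x) = Im (pos y)" using eq by simp
      then show ?thesis unfolding k k' Im_pos_Tail by simp
    next
      case False
      then obtain b i j where "j \<le> d" "y = spoke b i j" using verts_on_spokes[OF y] by blast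
      then have "- real d \<le> Im (pos y)" using Im_pos_spoke_ge by simp
      moreover have "Im (pos x) = - real d - 1 - real k" unfolding k by (rule Im_pos_Tail)
      ultimately show ?thesis using eq tail[of k] by simp
    qed
  next
    case False
    then obtain b i j where j: "j \<le> d" and xs: "x = spoke b i j" using verts_on_spokes[OF x] by blast
    show ?thesis
    proof (cases "\<exists>k'. y = Tail k'")
      case True
      then obtain k' where "y = Tail k'" by blast
      then have "Im (pos y) = - real d - 1 - real k'" by (simp add: Im_pos_Tail)
      moreover have "- real d \<le> Im (pos x)" using Im_pos_spoke_ge[OF j] xs by simp
      ultimately show ?thesis using eq tail[of k'] by simp
    next
      case False
      then obtain b' k j' where "j' \<le> d" "y = spoke b' k j'" using verts_on_spokes[OF y] by blast
      then show ?thesis using pos_spoke_eq[OF j] eq xs by simp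
    qed
  qed
qed

lemma arc_drawn:
  assumes "(a, c) \<in> arcs"
  shows "arc (drawn a c) \<and> pathstart (drawn a c) = pos a \<and> pathfinish (drawn a c) = pos c"
proof (cases "a = Cyc (L - 1) \<and> c = Cyc 0")
  case True
  then show ?thesis using arc_closing unfolding drawn_def closing_def by simp
next
  case False
  have "pos a \<noteq> pos c" using arcs_in_verts[OF assms] inj_on_pos unfolding inj_on_def by blast
  moreover have "drawn a c = linepath (pos a) (pos c)" unfolding drawn_def using False by (rule if_not_P)
  ultimately show ?thesis by simp
qed

lemma arcs_cover_verts:
  assumes "x \<in> verts"
  shows "\<exists>(a, c)\<in>arcs. x = a \<or> x = c"
proof (cases x)
  case (Cyc i)
  then show ?thesis using assms unfolding arcs_def by auto
next
  case (Spoke b i j)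
  then have "x = spoke b i j" "i < L" "j < d" using assms by (auto simp: spoke_def)
  then show ?thesis using spoke_arc by blast
next
  case (Pole b)
  have "(spoke b 0 (d - 1), spoke b 0 (Suc (d - 1))) \<in> arcs"
    using L_bounds d_pos by (intro spoke_arc) auto
  moreover have "x = spoke b 0 (Suc (d - 1))" using Pole d_pos by simp
  ultimately show ?thesis by blast
next
  case (Tail k)
  then have "(south k, south (Suc k)) \<in> arcs" "x = south (Suc k)"
    using assms south_arc by (auto simp: south_def)
  then show ?thesis by blast
qed

lemma planar: "planar_graph {..<n} E"
proof -
  have "planar_graph verts ((\<lambda>(a, c). {a, c}) ` arcs)"
  proof (rule planar_graph_by_arcs[OF refl arcs_cover_verts _ inj_on_pos arc_drawn])
    show "a \<in> verts \<and> c \<in> verts" if "(a, c) \<in> arcs" for a c using arcs_in_verts[OF that] by simp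
    show "path_image (drawn a c) \<inter> path_image (drawn a' c') \<subseteq> pos ` ({a, c} \<inter> {a', c'})"
      if "(a, c) \<in> arcs" "(a', c') \<in> arcs" "{a, c} \<noteq> {a', c'}" for a c a' c'
      using arcs_meet_properly[OF that] unfolding meets_properly_def .
  qed
  moreover have "\<forall>e\<in>(\<lambda>(a, c). {a, c}) ` arcs. e \<subseteq> verts" using arcs_in_verts by auto
  moreover have "E = (`) enc ` (\<lambda>(a, c). {a, c}) ` arcs"
    unfolding E_def image_image by (rule image_cong) auto
  ultimately show ?thesis using planar_graph_bij_image[OF _ bij_enc] by simp
qed

end

lemma nine_sq_le_of_le_sqrt:
  assumes "real d \<le> sqrt (real n) / 3"
  shows "9 * d\<^sup>2 \<le> n"
proof -
  have "real (3 * d) \<le> sqrt (real n)" using assms by simp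
  then have "(real (3 * d))\<^sup>2 \<le> (sqrt (real n))\<^sup>2" by (rule power_mono) simp
  then have "real (9 * d\<^sup>2) \<le> real n" by (simp add: power_mult_distrib)
  then show ?thesis by (simp only: of_nat_le_iff)
qed

theorem theorem1:
  fixes n d :: nat
  assumes "1 \<le> d" and "real d \<le> sqrt (real n) / 3"
  shows "\<exists>(E :: nat set set) u v (rho :: nat set \<Rightarrow> nat).
           simple_graph {..<n} E \<and> connected_graph {..<n} E \<and> planar_graph {..<n} E \<and>
           u \<in> {..<n} \<and> v \<in> {..<n} \<and> gdist {..<n} E u v = d \<and>
           (\<forall>C. C \<subseteq> {..<n} \<and> C \<noteq> {} \<longrightarrow> rho C \<in> C) \<and>
           (\<forall>R K1 K2 K3. R > 2 * d \<and> (\<forall>C. K1 C < R \<and> K2 C < R \<and> K3 C < R) \<longrightarrow>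
               reach {..<n} (E - kpr_removed {..<n} E R rho K1 K2 K3) u v)"
proof -
  interpret double_wheel d n
    using assms(1) nine_sq_le_of_le_sqrt[OF assms(2)] by unfold_locales
  have "\<forall>C. C \<subseteq> {..<n} \<and> C \<noteq> {} \<longrightarrow> root C \<in> C" using root_in by blast
  moreover have "\<forall>R K1 K2 K3. R > 2 * d \<and> (\<forall>C. K1 C < R \<and> K2 C < R \<and> K3 C < R) \<longrightarrow>
      reach {..<n} (E - kpr_removed {..<n} E R root K1 K2 K3) u0 v0"
    using kpr_keeps_u0_v0 by blast
  ultimately show ?thesis
    using simple connected planar gdist_u0_v0 u0_in v0_in
    by (intro exI[of _ E] exI[of _ u0] exI[of _ v0] exI[of _ root] conjI) simp_all
qed

end
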